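(* Consider the following probabilistic synthesis model. Let $N,M\ge 1$, let $\sigma^2>0$, and let $\boldsymbol{\Psi}_1,\dots,\boldsymbol{\Psi}_N\in\mathbb{C}^{N\times M}$ be given matrices. The observation ${\mathbf y}\in\mathbb{R}^N$ is $$ {\mathbf y}=\Re\Big(\sum_{n=1}^N\boldsymbol{\Psi}_n{\mathbf w}_n\Big)+\boldsymbol{\epsilon}, $$ where $\boldsymbol{\epsilon}\sim\mathcal{N}(\mathbf 0,\sigma^2{\mathbf I}_N)$ is real Gaussian white noise independent of the latent coefficients, and the latent vectors ${\mathbf w}_1,\dots,{\mathbf w}_N\in\mathbb{C}^M$ are mutually decorrelated (hence independent) zero-mean circular complex Gaussian vectors, ${\mathbf w}_n\sim\mathscr{CN}_c(\mathbf 0,{\mathbf C}(\theta_n))$. Here, for a fixed Hermitian positive-semidefinite function $f$ and fixed scales $s_1,\dots,s_M$, the matrix ${\mathbf C}(\theta)\in\mathbb{C}^{M\times M}$ is defined by $[{\mathbf C}(\theta)]_{mm'}=f(s_m+\theta,s_{m'}+\theta)$, and $\boldsymbol{\theta}=(\theta_1,\dots,\theta_N)\in\mathbb{R}^N$ is an unknown parameter. For a parameter vector $\boldsymbol{\theta}$ define $$ {\mathbf C}_y(\boldsymbol{\theta})=\sigma^2{\mathbf I}+\tfrac12\Re\Big(\sum_{n=1}^N\boldsymbol{\Psi}_n{\mathbf C}(\theta_n)\boldsymbol{\Psi}_n^H\Big), $$ let ${\mathbf D}=[\boldsymbol{\Psi}_1\ \cdots\ \boldsymbol{\Psi}_N]\in\mathbb{C}^{N\times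 MN}$, let $\boldsymbol{\Gamma}_0(\boldsymbol{\theta})$ be the block-diagonal matrix with diagonal blocks ${\mathbf C}(\theta_1),\dots,{\mathbf C}(\theta_N)$, and let $$ \boldsymbol{\Gamma}(\boldsymbol{\theta})=\boldsymbol{\Gamma}_0(\boldsymbol{\theta})-\tfrac14\boldsymbol{\Gamma}_0(\boldsymbol{\theta}){\mathbf D}^H{\mathbf C}_y(\boldsymbol{\theta})^{-1}{\mathbf D}\boldsymbol{\Gamma}_0(\boldsymbol{\theta}) $$ (the posterior covariance of ${\mathbf W}=\mathsf{vec}({\mathbf w}_1,\dots,{\mathbf w}_N)$ given ${\mathbf y}$), with $\boldsymbol{\Gamma}_n(\boldsymbol{\theta})\in\mathbb{C}^{M\times M}$ its $n$-th diagonal block. Then the Expectation-Maximization algorithm for maximum-likelihood estimation of $\boldsymbol{\theta}$ from the observation ${\mathbf y}$, with ${\mathbf W}$ as latent variable, starting at iteration $k$ from the current estimate $\tilde{\boldsymbol{\theta}}^{(k-1)}$, consists of the following two steps: 1. for each $n\in\{1,\dots,N\}$, the posterior mean of ${\mathbf w}_n$ is $$ \tilde{\mathbf w}_n^{(k)}=\tfrac12{\mathbf C}\big(\tilde\theta_n^{(k-1)}\big)\boldsymbol{\Psi}_n^H{\mathbf C}_y\big(\tilde{\boldsymbol{\theta}}^{(k-1)}\big)^{-1}{\mathbf y}; $$ 2. the parameter is updated componentwise by $\tilde\theta_n^{(k)}=\arg\min_{\theta}Q_{kn}(\theta)$, where $$ Q_{kn}(\theta)=\log|\det({\mathbf C}(\theta))|+\tilde{\mathbf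 w}_n^{(k)H}{\mathbf C}(\theta)^{-1}\tilde{\mathbf w}_n^{(k)}+\mathrm{Trace}\Big({\mathbf C}(\theta)^{-1}\boldsymbol{\Gamma}_n\big(\tilde{\boldsymbol{\theta}}^{(k-1)}\big)\Big). $$
   Context: In the paper's setting, $\psi$ is an analysis wavelet, $\psi_s(t)=q^{-s/2}\psi(q^{-s}t)$ for a constant $q>1$, $s\in\{s_1,\dots,s_M\}$, the signal is sampled at $N$ times $\tau_1,\dots,\tau_N$ (finite periodic setting), and $\boldsymbol{\Psi}_n$ is the matrix whose $m$-th column is $(\psi_{s_m}(\tau_{1-n}),\dots,\psi_{s_m}(\tau_{N-n}))^T$; the claim only uses that the $\boldsymbol{\Psi}_n$ are fixed complex $N\times M$ matrices. $\mathscr{CN}_c(\mathbf 0,{\mathbf C})$ denotes the zero-mean circular complex Gaussian distribution with covariance ${\mathbf C}$. The function $f$ is Hermitian and positive semidefinite, and ${\mathbf C}(\theta)$ is assumed invertible where used. *)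

theory Defs
  imports "HOL-Probability.Probability"
begin

definition herm_psd_fun :: "(real \<Rightarrow> real \<Rightarrow> complex) \<Rightarrow> bool" where
  "herm_psd_fun f \<longleftrightarrow>
     (\<forall>x y. f x y = cnj (f y x)) \<and>
     (\<forall>(xs::real list) (c::complex list). length c = length xs \<longrightarrow>
        0 \<le> Re (\<Sum>i<length xs. \<Sum>j<length xs. cnj (c!i) * c!j * f (xs!i) (xs!j)))"

definition adj :: "complex^'a^'b \<Rightarrow> complex^'b^'a" where
  "adj A = (\<chi> i j. cnj (A$j$i))"

definition Re_mat :: "complex^'a^'b \<Rightarrow> real^'a^'b" where
  "Re_mat A = (\<chi> i j. Re (A$i$j))"

definition cplx_vec :: "real^'a \<Rightarrow> complex^'a" where
  "cplx_vec x = (\<chi> i. complex_of_real (x$i))"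

definition cplx_mat :: "real^'a^'b \<Rightarrow> complex^'a^'b" where
  "cplx_mat A = (\<chi> i j. complex_of_real (A$i$j))"

definition mtrace :: "complex^'a^'a \<Rightarrow> complex" where
  "mtrace A = (\<Sum>i\<in>UNIV. A$i$i)"

definition hform :: "complex^'a \<Rightarrow> complex^'a^'a \<Rightarrow> complex" where
  "hform w A = (\<Sum>i\<in>UNIV. cnj (w$i) * (A *v w)$i)"

definition Cmat :: "(real \<Rightarrow> real \<Rightarrow> complex) \<Rightarrow> ('m::finite \<Rightarrow> real) \<Rightarrow> real \<Rightarrow> complex^'m^'m" where
  "Cmat f s \<theta> = (\<chi> m m'. f (s m + \<theta>) (s m' + \<theta>))"

definition Cy :: "(real \<Rightarrow> real \<Rightarrow> complex) \<Rightarrow> ('m::finite \<Rightarrow> real) \<Rightarrow> ('n::finite \<Rightarrow> complex^'m^'n)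
                 \<Rightarrow> real \<Rightarrow> real^'n \<Rightarrow> real^'n^'n" where
  "Cy f s \<Psi> \<sigma> \<theta> = (\<sigma>\<^sup>2) *\<^sub>R mat 1 +
      (1/2) *\<^sub>R Re_mat (\<Sum>n\<in>UNIV. \<Psi> n ** Cmat f s (\<theta>$n) ** adj (\<Psi> n))"

definition w_tilde :: "(real \<Rightarrow> real \<Rightarrow> complex) \<Rightarrow> ('m::finite \<Rightarrow> real) \<Rightarrow> ('n::finite \<Rightarrow> complex^'m^'n)
                 \<Rightarrow> real \<Rightarrow> real^'n \<Rightarrow> real^'n \<Rightarrow> 'n \<Rightarrow> complex^'m" where
  "w_tilde f s \<Psi> \<sigma> \<theta> y n =
     (1/2) *\<^sub>R ((Cmat f s (\<theta>$n) ** adj (\<Psi> n)) *v cplx_vec (matrix_inv (Cy f s \<Psi> \<sigma> \<theta>) *v y))"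

definition Dmat :: "('n::finite \<Rightarrow> complex^'m::finite^'n) \<Rightarrow> complex^('n \<times> 'm)^'n" where
  "Dmat \<Psi> = (\<chi> i. \<chi> p. \<Psi> (fst p) $ i $ snd p)"

definition Gamma0 :: "(real \<Rightarrow> real \<Rightarrow> complex) \<Rightarrow> ('m::finite \<Rightarrow> real) \<Rightarrow> real^'n::finite
                 \<Rightarrow> complex^('n \<times> 'm)^('n \<times> 'm)" where
  "Gamma0 f s \<theta> = (\<chi> p q. if fst p = fst q then Cmat f s (\<theta>$fst p) $ snd p $ snd q else 0)"

definition Gamma :: "(real \<Rightarrow> real \<Rightarrow> complex) \<Rightarrow> ('m::finite \<Rightarrow> real) \<Rightarrow> ('n::finite \<Rightarrow> complex^'m^'n)
                 \<Rightarrow> real \<Rightarrow> real^'n \<Rightarrow> complex^('n \<times> 'm)^('n \<times> 'm)" where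
  "Gamma f s \<Psi> \<sigma> \<theta> = Gamma0 f s \<theta> -
     (1/4) *\<^sub>R (Gamma0 f s \<theta> ** adj (Dmat \<Psi>) ** cplx_mat (matrix_inv (Cy f s \<Psi> \<sigma> \<theta>))
                 ** Dmat \<Psi> ** Gamma0 f s \<theta>)"

definition Gamma_blk :: "(real \<Rightarrow> real \<Rightarrow> complex) \<Rightarrow> ('m::finite \<Rightarrow> real) \<Rightarrow> ('n::finite \<Rightarrow> complex^'m^'n)
                 \<Rightarrow> real \<Rightarrow> real^'n \<Rightarrow> 'n \<Rightarrow> complex^'m^'m" where
  "Gamma_blk f s \<Psi> \<sigma> \<theta> n = (\<chi> m m'. Gamma f s \<Psi> \<sigma> \<theta> $ (n,m) $ (n,m'))"

definition Qkn :: "(real \<Rightarrow> real \<Rightarrow> complex) \<Rightarrow> ('m::finite \<Rightarrow> real) \<Rightarrow> ('n::finite \<Rightarrow> complex^'m^'n)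
                 \<Rightarrow> real \<Rightarrow> real^'n \<Rightarrow> real^'n \<Rightarrow> 'n \<Rightarrow> real \<Rightarrow> real" where
  "Qkn f s \<Psi> \<sigma> thold y n t =
     ln (cmod (det (Cmat f s t)))
     + Re (hform (w_tilde f s \<Psi> \<sigma> thold y n) (matrix_inv (Cmat f s t)))
     + Re (mtrace (matrix_inv (Cmat f s t) ** Gamma_blk f s \<Psi> \<sigma> thold n))"

definition cgauss_density :: "complex^'m::finite^'m \<Rightarrow> complex^'m \<Rightarrow> real" where
  "cgauss_density C w =
     exp (- Re (hform w (matrix_inv C))) / (pi ^ CARD('m) * cmod (det C))"

definition prior_density :: "(real \<Rightarrow> real \<Rightarrow> complex) \<Rightarrow> ('m::finite \<Rightarrow> real) \<Rightarrow> real^'n::finite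
                 \<Rightarrow> complex^'m^'n \<Rightarrow> real" where
  "prior_density f s \<theta> W = (\<Prod>n\<in>UNIV. cgauss_density (Cmat f s (\<theta>$n)) (W$n))"

definition lik_density :: "('n::finite \<Rightarrow> complex^'m::finite^'n) \<Rightarrow> real \<Rightarrow> real^'n
                 \<Rightarrow> complex^'m^'n \<Rightarrow> real" where
  "lik_density \<Psi> \<sigma> y W =
     (\<Prod>i\<in>UNIV. normal_density (Re ((\<Sum>n\<in>UNIV. \<Psi> n *v (W$n)) $ i)) \<sigma> (y$i))"

definition joint_density :: "(real \<Rightarrow> real \<Rightarrow> complex) \<Rightarrow> ('m::finite \<Rightarrow> real) \<Rightarrow> ('n::finite \<Rightarrow> complex^'m^'n)
                 \<Rightarrow> real \<Rightarrow> real^'n \<Rightarrow> real^'n \<Rightarrow> complex^'m^'n \<Rightarrow> real" where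
  "joint_density f s \<Psi> \<sigma> \<theta> y W = lik_density \<Psi> \<sigma> y W * prior_density f s \<theta> W"

definition post_density :: "(real \<Rightarrow> real \<Rightarrow> complex) \<Rightarrow> ('m::finite \<Rightarrow> real) \<Rightarrow> ('n::finite \<Rightarrow> complex^'m^'n)
                 \<Rightarrow> real \<Rightarrow> real^'n \<Rightarrow> real^'n \<Rightarrow> complex^'m^'n \<Rightarrow> real" where
  "post_density f s \<Psi> \<sigma> \<theta> y W =
     joint_density f s \<Psi> \<sigma> \<theta> y W / (\<integral>V. joint_density f s \<Psi> \<sigma> \<theta> y V \<partial>lborel)"

definition post_mean :: "(real \<Rightarrow> real \<Rightarrow> complex) \<Rightarrow> ('m::finite \<Rightarrow> real) \<Rightarrow> ('n::finite \<Rightarrow> complex^'m^'n)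
                 \<Rightarrow> real \<Rightarrow> real^'n \<Rightarrow> real^'n \<Rightarrow> 'n \<Rightarrow> complex^'m" where
  "post_mean f s \<Psi> \<sigma> \<theta> y n = (\<integral>W. post_density f s \<Psi> \<sigma> \<theta> y W *\<^sub>R (W$n) \<partial>lborel)"

definition EM_Q :: "(real \<Rightarrow> real \<Rightarrow> complex) \<Rightarrow> ('m::finite \<Rightarrow> real) \<Rightarrow> ('n::finite \<Rightarrow> complex^'m^'n)
                 \<Rightarrow> real \<Rightarrow> real^'n \<Rightarrow> real^'n \<Rightarrow> real^'n \<Rightarrow> real" where
  "EM_Q f s \<Psi> \<sigma> y thold \<theta> =
     (\<integral>W. post_density f s \<Psi> \<sigma> thold y W * ln (joint_density f s \<Psi> \<sigma> \<theta> y W) \<partial>lborel)"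

end

theory Submission
  imports Defs
begin

(* At the current estimate the joint density of (y, W) is, as a function of W, proportional to
   exp (- B (W - mu) (W - mu)), where B is a positive definite real bilinear form on C^(M x N),
   viewed as a real Euclidean space, and mu = (w~_1, ..., w~_N): completing the square in the data
   term is exactly where C_y(theta)^-1 enters. So the posterior is Gaussian, and its mean is mu by
   the symmetry x |-> -x of the centred density. For the second moments we use Stein's identity
   E [B X v * phi X] = phi v / 2 for linear phi: choosing v with B v x = <e, x> turns the real
   and imaginary parts of the entries of W into such functionals, and the resulting covariances
   recombine into the blocks Gamma_n. Taking the posterior expectation of log p(y, W; theta) then
   gives EM_Q(theta) = const - sum_n Q_kn(theta_n), so the M-step separates over n. *)

lemma lborel_integral_translate:
  fixes f :: "'a::euclidean_space \<Rightarrow> 'b::{banach, second_countable_topology}"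
  assumes [measurable]: "f \<in> borel_measurable borel"
  shows "(\<integral>x. f (c + x) \<partial>lborel) = (\<integral>x. f x \<partial>lborel)"
proof -
  have "(\<integral>x. f x \<partial>lborel) = (\<integral>x. f x \<partial>distr lborel borel ((+) c))"
    by (simp add: lborel_distr_plus)
  also have "\<dots> = (\<integral>x. f (c + x) \<partial>lborel)"
    by (rule integral_distr) auto
  finally show ?thesis by simp
qed

lemma lborel_integrable_translate:
  fixes f :: "'a::euclidean_space \<Rightarrow> 'b::{banach, second_countable_topology}"
  assumes [measurable]: "f \<in> borel_measurable borel"
  shows "integrable lborel (\<lambda>x. f (c + x)) \<longleftrightarrow> integrable lborel f"
proof -
  have "integrable lborel f \<longleftrightarrow> integrable (distr lborel borel ((+) c)) f"
    by (simp add: lborel_distr_plus)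
  also have "\<dots> \<longleftrightarrow> integrable lborel (\<lambda>x. f (c + x))"
    by (rule integrable_distr_eq) auto
  finally show ?thesis by simp
qed

lemma lborel_integral_uminus:
  fixes f :: "'a::euclidean_space \<Rightarrow> 'b::{banach, second_countable_topology}"
  assumes [measurable]: "f \<in> borel_measurable borel"
  shows "(\<integral>x. f (- x) \<partial>lborel) = (\<integral>x. f x \<partial>lborel)"
proof -
  have "distr lborel borel uminus = (lborel :: 'a measure)"
    using lborel_affine[of "-1::real" "0::'a"] by (simp add: density_1 cong: distr_cong)
  then have "(\<integral>x. f x \<partial>lborel) = (\<integral>x. f x \<partial>distr lborel borel uminus)"
    by simp
  also have "\<dots> = (\<integral>x. f (- x) \<partial>lborel)"
    by (rule integral_distr) auto
  finally show ?thesis by simp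
qed

section \<open>Gaussian integrals on a Euclidean space\<close>

lemma nn_integral_exp_neg_square:
  assumes a: "a > 0"
  shows "(\<integral>\<^sup>+t. ennreal (exp (- a * t\<^sup>2)) \<partial>lborel) = ennreal (sqrt (pi / a))"
proof -
  define \<sigma> where "\<sigma> = sqrt (1 / (2 * a))"
  have \<sigma>: "\<sigma> > 0" "\<sigma>\<^sup>2 = 1 / (2 * a)"
    using a by (simp_all add: \<sigma>_def)
  define K where "K = sqrt (2 * pi * \<sigma>\<^sup>2)"
  have "K > 0" using a \<sigma> by (simp add: K_def)
  have "exp (- a * t\<^sup>2) = K * normal_density 0 \<sigma> t" for t
  proof -
    have "- (t - 0)\<^sup>2 / (2 * \<sigma>\<^sup>2) = - a * t\<^sup>2" using a by (simp add: \<sigma>(2) field_simps)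
    then show ?thesis using \<open>K > 0\<close> unfolding normal_density_def K_def[symmetric] by simp
  qed
  then have "(\<integral>\<^sup>+t. ennreal (exp (- a * t\<^sup>2)) \<partial>lborel)
      = (\<integral>\<^sup>+t. ennreal K * ennreal (normal_density 0 \<sigma> t) \<partial>lborel)"
    using \<open>K > 0\<close> by (simp add: ennreal_mult)
  also have "\<dots> = ennreal K * (\<integral>\<^sup>+t. ennreal (normal_density 0 \<sigma> t) \<partial>lborel)"
    by (rule nn_integral_cmult) auto
  also have "(\<integral>\<^sup>+t. ennreal (normal_density 0 \<sigma> t) \<partial>lborel) = 1"
    using \<sigma> by (subst nn_integral_eq_integral) auto
  also have "K = sqrt (pi / a)" using a unfolding K_def \<sigma>(2) by simp
  finally show ?thesis using a by simp
qed

lemma integrable_exp_neg_norm_square: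
  assumes a: "a > 0"
  shows "integrable lborel (\<lambda>x::'a::euclidean_space. exp (- a * (norm x)\<^sup>2))"
proof (rule integrableI_nonneg)
  show "(\<lambda>x::'a. exp (- a * (norm x)\<^sup>2)) \<in> borel_measurable lborel"
    by measurable
  show "AE x in lborel. 0 \<le> exp (- a * (norm x)\<^sup>2)"
    by simp
  have exp_prod: "exp (- a * (norm x)\<^sup>2) = (\<Prod>b\<in>Basis. exp (- a * (x \<bullet> b)\<^sup>2))" for x :: 'a
  proof -
    have "(norm x)\<^sup>2 = (\<Sum>b\<in>Basis. (x \<bullet> b)\<^sup>2)"
      unfolding power2_norm_eq_inner by (subst euclidean_inner) (simp add: power2_eq_square)
    then show ?thesis by (simp add: exp_sum[symmetric] sum_distrib_left sum_negf)
  qed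
  have "(\<integral>\<^sup>+x. ennreal (exp (- a * (norm x)\<^sup>2)) \<partial>(lborel::'a measure))
     = (\<integral>\<^sup>+x. (\<Prod>b\<in>Basis. (\<lambda>b t. ennreal (exp (- a * t\<^sup>2))) b (x \<bullet> b)) \<partial>(lborel::'a measure))"
    unfolding exp_prod by (intro nn_integral_cong) (simp add: prod_ennreal)
  also have "\<dots> = (\<Prod>b\<in>(Basis::'a set). \<integral>\<^sup>+t. ennreal (exp (- a * t\<^sup>2)) \<partial>lborel)"
    by (rule nn_integral_lborel_prod) auto
  also have "\<dots> = (\<Prod>b\<in>(Basis::'a set). ennreal (sqrt (pi / a)))"
    unfolding nn_integral_exp_neg_square[OF a] by simp
  also have "\<dots> < \<infinity>"
    by (simp add: power_less_top_ennreal)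
  finally show "(\<integral>\<^sup>+x. ennreal (exp (- a * (norm x)\<^sup>2)) \<partial>(lborel::'a measure)) < \<infinity>" .
qed

lemma exp_neg_square_mult_bound:
  assumes c: "c > 0"
  shows "exp (- c * r\<^sup>2) * (1 + r)\<^sup>2 \<le> (2 + 4 / c) * exp (- (c / 2) * (r::real)\<^sup>2)"
proof -
  have "(1 + r)\<^sup>2 \<le> 2 + 2 * r\<^sup>2"
    using zero_le_square[of "r - 1"] by (simp add: power2_eq_square algebra_simps)
  also have "\<dots> \<le> (2 + 4 / c) * (1 + (c / 2) * r\<^sup>2)"
    using c by (simp add: field_simps)
  also have "\<dots> \<le> (2 + 4 / c) * exp ((c / 2) * r\<^sup>2)"
    using c by (intro mult_left_mono exp_ge_add_one_self) auto
  finally have "exp (- c * r\<^sup>2) * (1 + r)\<^sup>2 \<le> exp (- c * r\<^sup>2) * ((2 + 4 / c) * exp ((c / 2) * r\<^sup>2))"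
    by (intro mult_left_mono) auto
  also have "\<dots> = (2 + 4 / c) * exp (- (c / 2) * r\<^sup>2)"
    by (simp add: mult_exp_exp)
  finally show ?thesis .
qed

lemma linear_affine_norm_bound:
  fixes L :: "'a::euclidean_space \<Rightarrow> 'b::real_normed_vector"
  assumes "linear L"
  shows "\<exists>K\<ge>0. \<forall>x. norm (c + L x) \<le> K * (1 + norm x)"
proof -
  obtain K where K: "K > 0" "\<And>x. norm (L x) \<le> norm x * K"
    using assms linear_conv_bounded_linear bounded_linear.pos_bounded by metis
  have "norm (c + L x) \<le> (norm c + K) * (1 + norm x)" for x
  proof -
    have "norm (c + L x) \<le> norm c + norm x * K"
      using norm_triangle_ineq[of c "L x"] K(2)[of x] by linarith
    also have "\<dots> \<le> (norm c + K) * (1 + norm x)"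
      using K(1) by (simp add: algebra_simps)
    finally show ?thesis .
  qed
  moreover have "norm c + K \<ge> 0"
    using K(1) by simp
  ultimately show ?thesis by blast
qed

lemma linear_affine_mult_norm_bound:
  fixes \<phi> :: "'a::euclidean_space \<Rightarrow> 'b::real_normed_vector"
    and \<psi> :: "'a \<Rightarrow> 'c::real_normed_vector"
  assumes "linear \<phi>" "linear \<psi>"
  shows "\<exists>K. \<forall>x. norm (a + \<phi> x) * norm (b + \<psi> x) \<le> K * (1 + norm x)\<^sup>2"
proof -
  obtain K1 K2 where K: "K1 \<ge> 0" "K2 \<ge> 0"
    and bound: "\<And>x. norm (a + \<phi> x) \<le> K1 * (1 + norm x)" "\<And>x. norm (b + \<psi> x) \<le> K2 * (1 + norm x)"
    using linear_affine_norm_bound[OF assms(1)] linear_affine_norm_bound[OF assms(2)] by metis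
  have "norm (a + \<phi> x) * norm (b + \<psi> x) \<le> (K1 * (1 + norm x)) * (K2 * (1 + norm x))" for x
    using bound K by (intro mult_mono) auto
  then show ?thesis
    by (metis (no_types, lifting) mult.commute mult.left_commute power2_eq_square)
qed

lemma linear_mult_norm_bound:
  fixes \<phi> :: "'a::euclidean_space \<Rightarrow> 'b::real_normed_vector"
    and \<psi> :: "'a \<Rightarrow> 'c::real_normed_vector"
  assumes "linear \<phi>" "linear \<psi>"
  shows "\<exists>K. \<forall>x. norm (\<phi> x) * norm (\<psi> x) \<le> K * (1 + norm x)\<^sup>2"
  using linear_affine_mult_norm_bound[OF assms, of 0 0] by simp

lemma exp_difference_quotient_tendsto:
  "((\<lambda>k. (exp (2 * inverse (real (Suc k)) * b) - 1) / (2 * inverse (real (Suc k)))) \<longlongrightarrow> b) sequentially"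
proof (cases "b = 0")
  case False
  define u where "u k = 2 * inverse (real (Suc k)) * b" for k
  have "u \<longlonglongrightarrow> 0"
    unfolding u_def by (intro tendsto_mult_left_zero tendsto_mult_right_zero LIMSEQ_inverse_real_of_nat)
  then have "filterlim u (at 0) sequentially"
    unfolding filterlim_at using False by (auto simp: u_def)
  moreover have "((\<lambda>h. (exp h - 1) / h) \<longlongrightarrow> 1) (at (0::real))"
    using DERIV_exp[of 0] unfolding has_field_derivative_iff by simp
  ultimately have "((\<lambda>k. (exp (u k) - 1) / u k) \<longlongrightarrow> 1) sequentially"
    by (rule filterlim_compose[of "\<lambda>h. (exp h - 1) / h", rotated])
  then have "((\<lambda>k. b * ((exp (u k) - 1) / u k)) \<longlongrightarrow> b * 1) sequentially"
    by (intro tendsto_mult tendsto_const)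
  moreover have "b * ((exp (u k) - 1) / u k)
      = (exp (2 * inverse (real (Suc k)) * b) - 1) / (2 * inverse (real (Suc k)))" for k
    using False by (simp add: u_def field_simps)
  ultimately show ?thesis
    by simp
qed simp

lemma abs_exp_minus_one_le: "\<bar>exp (u::real) - 1\<bar> \<le> \<bar>u\<bar> * exp \<bar>u\<bar>"
proof (cases "u \<ge> 0")
  case True
  have "1 - u \<le> exp (- u)" using exp_ge_add_one_self[of "- u"] by simp
  then have "exp u * (1 - u) \<le> 1" by (simp add: exp_minus field_simps)
  then show ?thesis using True by (simp add: algebra_simps)
next
  case False
  then have "exp u \<le> 1" "1 + u \<le> exp u" "1 \<le> exp \<bar>u\<bar>"
    using exp_ge_add_one_self[of u] by auto
  moreover have "- u \<le> - u * exp \<bar>u\<bar>"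
    using False mult_left_mono[OF \<open>1 \<le> exp \<bar>u\<bar>\<close>, of "- u"] by simp
  moreover have "\<bar>exp u - 1\<bar> = 1 - exp u" "\<bar>u\<bar> = - u"
    using False \<open>exp u \<le> 1\<close> by auto
  ultimately have "\<bar>exp u - 1\<bar> \<le> - u * exp \<bar>u\<bar>"
    by linarith
  with \<open>\<bar>u\<bar> = - u\<close> show ?thesis
    by simp
qed

lemma borel_measurable_linear:
  fixes L :: "'a::euclidean_space \<Rightarrow> 'b::{real_normed_vector, second_countable_topology}"
  assumes "linear L"
  shows "L \<in> borel_measurable borel"
  using assms linear_conv_bounded_linear linear_continuous_on borel_measurable_continuous_onI by blast

locale gaussian_form =
  fixes B :: "'v::euclidean_space \<Rightarrow> 'v \<Rightarrow> real"
  assumes B_bilinear: "bilinear B"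
    and B_sym: "\<And>x y. B x y = B y x"
    and B_pos: "\<And>x. x \<noteq> 0 \<Longrightarrow> B x x > 0"
begin

lemma bounded_bilinear_B: "bounded_bilinear B"
  using B_bilinear bilinear_conv_bounded_bilinear by blast

lemmas B_diff_left = bounded_bilinear.diff_left[OF bounded_bilinear_B]
  and B_diff_right = bounded_bilinear.diff_right[OF bounded_bilinear_B]
  and B_minus_left = bounded_bilinear.minus_left[OF bounded_bilinear_B]
  and B_minus_right = bounded_bilinear.minus_right[OF bounded_bilinear_B]
  and B_scaleR_left = bounded_bilinear.scaleR_left[OF bounded_bilinear_B]
  and B_scaleR_right = bounded_bilinear.scaleR_right[OF bounded_bilinear_B]
  and B_zero_left = bounded_bilinear.zero_left[OF bounded_bilinear_B]

lemma continuous_on_B: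
  fixes f h :: "'d::t2_space \<Rightarrow> 'v"
  assumes "continuous_on S f" "continuous_on S h"
  shows "continuous_on S (\<lambda>x. B (f x) (h x))"
  using bilinear_continuous_on_compose[OF assms B_bilinear] .

lemma linear_B_left: "linear (\<lambda>x. B x v)"
  using B_bilinear by (simp add: bilinear_def)

lemma B_coercive: "\<exists>c>0. \<forall>x. c * (norm x)\<^sup>2 \<le> B x x"
proof -
  obtain b :: 'v where "b \<in> Basis"
    using nonempty_Basis by blast
  then have "sphere (0::'v) 1 \<noteq> {}"
    by (auto intro!: exI[of _ b])
  moreover have "continuous_on (sphere 0 1) (\<lambda>x. B x x)"
    by (intro continuous_on_B continuous_on_id)
  ultimately obtain x0 where x0: "x0 \<in> sphere 0 1" and min: "\<forall>y\<in>sphere 0 1. B x0 x0 \<le> B y y"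
    using continuous_attains_inf[OF compact_sphere] by blast
  have "B x0 x0 * (norm x)\<^sup>2 \<le> B x x" for x
  proof (cases "x = 0")
    case False
    define y where "y = x /\<^sub>R norm x"
    have "y \<in> sphere 0 1" and xy: "x = norm x *\<^sub>R y"
      using False by (simp_all add: y_def)
    then have "B x0 x0 \<le> B y y"
      using min by blast
    then have "B x0 x0 * (norm x)\<^sup>2 \<le> B y y * (norm x)\<^sup>2"
      by (rule mult_right_mono) simp
    also have "B y y * (norm x)\<^sup>2 = B x x"
    proof -
      have "B x x = (norm x)\<^sup>2 * B y y"
        by (subst xy, subst xy) (simp add: B_scaleR_left B_scaleR_right power2_eq_square)
      then show ?thesis by (simp add: mult.commute)
    qed
    finally show ?thesis .
  qed (simp add: B_zero_left)
  moreover have "B x0 x0 > 0"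
    using x0 by (intro B_pos) auto
  ultimately show ?thesis by blast
qed

definition g :: "'v \<Rightarrow> real" where
  "g x = exp (- B x x)"

definition Z :: real where
  "Z = (\<integral>x. g x \<partial>lborel)"

lemma g_pos: "g x > 0"
  by (simp add: g_def)

lemma borel_measurable_g[measurable]: "g \<in> borel_measurable borel"
  unfolding g_def[abs_def]
  by (intro borel_measurable_continuous_onI continuous_intros continuous_on_B continuous_on_id)

lemma g_uminus: "g (- x) = g x"
  by (simp add: g_def B_minus_left B_minus_right)

lemma g_mult_exp_B: "g x * exp (2 * B x w) = exp (B w w) * g (x - w)"
proof -
  have "B (x - w) (x - w) = B x x - 2 * B x w + B w w"
    by (simp add: B_diff_left B_diff_right B_sym[of w x])
  then show ?thesis by (simp add: g_def mult_exp_exp)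
qed

lemma integrable_g_mult_square:
  "integrable lborel (\<lambda>x. g x * (1 + norm x)\<^sup>2)"
proof -
  obtain c where c: "c > 0" "\<And>x. c * (norm x)\<^sup>2 \<le> B x x"
    using B_coercive by blast
  show ?thesis
  proof (rule Bochner_Integration.integrable_bound)
    show "integrable lborel (\<lambda>x::'v. (2 + 4 / c) * exp (- (c / 2) * (norm x)\<^sup>2))"
      using c by (intro integrable_mult_right integrable_exp_neg_norm_square) simp
    have "g x * (1 + norm x)\<^sup>2 \<le> (2 + 4 / c) * exp (- (c / 2) * (norm x)\<^sup>2)" for x
    proof -
      have "g x \<le> exp (- c * (norm x)\<^sup>2)"
        using c(2)[of x] by (simp add: g_def)
      then have "g x * (1 + norm x)\<^sup>2 \<le> exp (- c * (norm x)\<^sup>2) * (1 + norm x)\<^sup>2"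
        by (intro mult_right_mono) auto
      also have "\<dots> \<le> (2 + 4 / c) * exp (- (c / 2) * (norm x)\<^sup>2)"
        using exp_neg_square_mult_bound[OF c(1)] .
      finally show ?thesis .
    qed
    moreover have "norm (g x * (1 + norm x)\<^sup>2) = g x * (1 + norm x)\<^sup>2" for x
      using g_pos[of x] by (simp add: abs_mult)
    ultimately show "AE x in lborel. norm (g x * (1 + norm x)\<^sup>2)
        \<le> norm ((2 + 4 / c) * exp (- (c / 2) * (norm x)\<^sup>2))"
      using c(1) by (intro AE_I2) simp
  qed measurable
qed

lemma integrable_g_shift_mult_square:
  "integrable lborel (\<lambda>x. g (x - u) * (1 + norm x)\<^sup>2)"
proof -
  have "integrable lborel (\<lambda>x. g x * (1 + norm (u + x))\<^sup>2)"
  proof (rule Bochner_Integration.integrable_bound)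
    show "integrable lborel (\<lambda>x. (1 + norm u)\<^sup>2 * (g x * (1 + norm x)\<^sup>2))"
      by (intro integrable_mult_right integrable_g_mult_square)
    have triangle: "1 + norm (u + x) \<le> (1 + norm u) * (1 + norm x)" for x
    proof -
      have "1 + norm (u + x) \<le> 1 + norm u + norm x + norm u * norm x"
        using norm_triangle_ineq[of u x] mult_nonneg_nonneg[OF norm_ge_zero norm_ge_zero, of u x]
        by linarith
      then show ?thesis
        by (simp add: algebra_simps)
    qed
    have bound: "norm (g x * (1 + norm (u + x))\<^sup>2) \<le> norm ((1 + norm u)\<^sup>2 * (g x * (1 + norm x)\<^sup>2))" for x
    proof -
      have "norm (g x * (1 + norm (u + x))\<^sup>2) = g x * (1 + norm (u + x))\<^sup>2"
        using g_pos[of x] by (simp add: abs_mult)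
      also have "\<dots> \<le> g x * ((1 + norm u) * (1 + norm x))\<^sup>2"
        using g_pos[of x] power_mono[OF triangle[of x]] by (intro mult_left_mono) auto
      also have "\<dots> = norm ((1 + norm u)\<^sup>2 * (g x * (1 + norm x)\<^sup>2))"
        using g_pos[of x] by (simp add: abs_mult power_mult_distrib)
      finally show ?thesis .
    qed
    show "AE x in lborel. norm (g x * (1 + norm (u + x))\<^sup>2)
        \<le> norm ((1 + norm u)\<^sup>2 * (g x * (1 + norm x)\<^sup>2))"
      using bound by (intro AE_I2) blast
  qed measurable
  then show ?thesis
    using lborel_integrable_translate[of "\<lambda>x. g (x - u) * (1 + norm x)\<^sup>2" u] by simp
qed

lemma integrable_g_shift_scaleR:
  fixes h :: "'v \<Rightarrow> 'b::{banach, second_countable_topology}"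
  assumes [measurable]: "h \<in> borel_measurable borel"
    and bound: "\<And>x. norm (h x) \<le> K * (1 + norm x)\<^sup>2"
  shows "integrable lborel (\<lambda>x. g (x - u) *\<^sub>R h x)"
proof (rule Bochner_Integration.integrable_bound)
  show "integrable lborel (\<lambda>x. \<bar>K\<bar> * (g (x - u) * (1 + norm x)\<^sup>2))"
    by (intro integrable_mult_right integrable_g_shift_mult_square)
  have "norm (h x) \<le> \<bar>K\<bar> * (1 + norm x)\<^sup>2" for x
    using bound[of x] mult_right_mono[OF abs_ge_self[of K], of "(1 + norm x)\<^sup>2"] by simp
  then have "g (x - u) * norm (h x) \<le> g (x - u) * (\<bar>K\<bar> * (1 + norm x)\<^sup>2)" for x
    using g_pos[of "x - u"] by (intro mult_left_mono) auto
  then show "AE x in lborel. norm (g (x - u) *\<^sub>R h x) \<le> norm (\<bar>K\<bar> * (g (x - u) * (1 + norm x)\<^sup>2))"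
    using g_pos by (intro AE_I2) (simp add: abs_mult abs_of_pos mult_ac)
qed measurable

lemma integrable_g_shift_linear:
  fixes L :: "'v \<Rightarrow> 'b::{banach, second_countable_topology}"
  assumes "linear L"
  shows "integrable lborel (\<lambda>x. g (x - u) *\<^sub>R L x)"
proof -
  obtain K where K: "K \<ge> 0" "\<And>x. norm (0 + L x) \<le> K * (1 + norm x)"
    using linear_affine_norm_bound[OF assms] by blast
  have "norm (L x) \<le> K * (1 + norm x)\<^sup>2" for x
  proof -
    have "1 + norm x \<le> (1 + norm x)\<^sup>2"
      using mult_left_mono[of 1 "1 + norm x" "1 + norm x"] by (simp add: power2_eq_square)
    then show ?thesis
      using K(2)[of x] mult_left_mono[OF _ K(1)] by (simp add: order_trans)
  qed
  then show ?thesis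
    using borel_measurable_linear[OF assms] by (rule integrable_g_shift_scaleR[rotated])
qed

lemma integrable_g: "integrable lborel g"
proof -
  have "norm (1::real) \<le> 1 * (1 + norm x)\<^sup>2" for x :: 'v
    by (simp add: one_le_power)
  then show ?thesis
    using integrable_g_shift_scaleR[of "\<lambda>_. 1::real" 1 0] by simp
qed

lemma Z_pos: "Z > 0"
proof -
  have "Z \<ge> 0"
    unfolding Z_def using g_pos by (intro integral_nonneg_AE) (simp add: less_imp_le)
  moreover have "Z \<noteq> 0"
  proof
    assume "Z = 0"
    then have "AE x in lborel. g x = 0"
      unfolding Z_def using integral_nonneg_eq_0_iff_AE[OF integrable_g] g_pos
      by (simp add: less_imp_le)
    then have "AE x in (lborel::'v measure). False"
      by (rule AE_mp) (auto intro!: AE_I2 simp: g_def)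
    then have "ae_filter (lborel::'v measure) = bot"
      using trivial_limit_def by blast
    then have "emeasure (lborel::'v measure) (space lborel) = 0"
      by (simp add: ae_filter_eq_bot_iff)
    then show False
      by simp
  qed
  ultimately show ?thesis
    by simp
qed

lemma integral_g_shift: "(\<integral>x. g (x - u) \<partial>lborel) = Z"
  using lborel_integral_translate[of "\<lambda>x. g (x - u)" u] by (simp add: Z_def)

lemma integral_g_linear:
  fixes L :: "'v \<Rightarrow> 'b::{banach, second_countable_topology}"
  assumes L: "linear L"
  shows "(\<integral>x. g x *\<^sub>R L x \<partial>lborel) = 0"
proof -
  note [measurable] = borel_measurable_linear[OF L]
  define I where "I = (\<integral>x. g x *\<^sub>R L x \<partial>lborel)"
  have "I = (\<integral>x. g (- x) *\<^sub>R L (- x) \<partial>lborel)"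
    unfolding I_def by (rule lborel_integral_uminus[symmetric]) measurable
  also have "\<dots> = - I"
    by (simp add: I_def g_uminus linear_neg[OF L])
  finally have "(2::real) *\<^sub>R I = 0"
    by (simp add: scaleR_2 eq_neg_iff_add_eq_0)
  then show ?thesis
    unfolding I_def by simp
qed

lemma integral_g_exp_B_linear:
  fixes \<phi> :: "'v \<Rightarrow> 'b::{banach, second_countable_topology}"
  assumes L: "linear \<phi>"
  shows "(\<integral>x. (g x * exp (2 * B x w)) *\<^sub>R \<phi> x \<partial>lborel) = (exp (B w w) * Z) *\<^sub>R \<phi> w"
proof -
  note [measurable] = borel_measurable_linear[OF L]
  have "(\<integral>x. (g x * exp (2 * B x w)) *\<^sub>R \<phi> x \<partial>lborel)
      = exp (B w w) *\<^sub>R (\<integral>x. g (x - w) *\<^sub>R \<phi> x \<partial>lborel)"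
    by (simp add: g_mult_exp_B flip: scaleR_scaleR)
  also have "(\<integral>x. g (x - w) *\<^sub>R \<phi> x \<partial>lborel) = (\<integral>x. g (w + x - w) *\<^sub>R \<phi> (w + x) \<partial>lborel)"
    by (rule lborel_integral_translate[symmetric]) measurable
  also have "\<dots> = (\<integral>x. g x *\<^sub>R \<phi> w + g x *\<^sub>R \<phi> x \<partial>lborel)"
    by (simp add: linear_add[OF L] scaleR_add_right)
  also have "\<dots> = Z *\<^sub>R \<phi> w"
    using integrable_g integrable_g_shift_linear[OF L, of 0]
    by (simp add: integral_g_linear[OF L] Z_def)
  finally show ?thesis
    by simp
qed

lemma integrable_g_B_linear:
  fixes \<phi> :: "'v \<Rightarrow> 'b::{banach, second_countable_topology}"
  assumes L: "linear \<phi>"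
  shows "integrable lborel (\<lambda>x. (g x * B x v) *\<^sub>R \<phi> x)"
proof -
  note [measurable] = borel_measurable_linear[OF L] borel_measurable_linear[OF linear_B_left]
  obtain K where "\<And>x. norm (B x v) * norm (\<phi> x) \<le> K * (1 + norm x)\<^sup>2"
    using linear_mult_norm_bound[OF linear_B_left L] by blast
  then show ?thesis
    using integrable_g_shift_scaleR[of "\<lambda>x. B x v *\<^sub>R \<phi> x" K 0] by simp
qed

lemma integrable_g_inner_affine:
  fixes \<phi> \<psi> :: "'v \<Rightarrow> 'b::euclidean_space"
  assumes "linear \<phi>" "linear \<psi>"
  shows "integrable lborel (\<lambda>x. g x * ((c + \<phi> x) \<bullet> (d + \<psi> x)))"
proof -
  note [measurable] = borel_measurable_linear[OF assms(1)] borel_measurable_linear[OF assms(2)]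
  obtain K where K: "\<And>x. norm (c + \<phi> x) * norm (d + \<psi> x) \<le> K * (1 + norm x)\<^sup>2"
    using linear_affine_mult_norm_bound[OF assms] by blast
  have "norm ((c + \<phi> x) \<bullet> (d + \<psi> x)) \<le> K * (1 + norm x)\<^sup>2" for x
    using Cauchy_Schwarz_ineq2[of "c + \<phi> x" "d + \<psi> x"] K[of x] by simp
  from integrable_g_shift_scaleR[of _ K 0, OF _ this] show ?thesis
    by simp
qed

lemma integral_g_exp_B_difference_quotient:
  fixes \<phi> :: "'v \<Rightarrow> 'b::{banach, second_countable_topology}"
  assumes L: "linear \<phi>" and "t \<noteq> 0"
  shows "(\<integral>x. (g x * ((exp (2 * t * B x v) - 1) / (2 * t))) *\<^sub>R \<phi> x \<partial>lborel)
    = (exp (t\<^sup>2 * B v v) * (Z / 2)) *\<^sub>R \<phi> v"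
proof -
  define w where "w = t *\<^sub>R v"
  have "(g x * ((exp (2 * t * B x v) - 1) / (2 * t))) *\<^sub>R \<phi> x
      = (1 / (2 * t)) *\<^sub>R ((g x * exp (2 * B x w)) *\<^sub>R \<phi> x - g x *\<^sub>R \<phi> x)" for x
  proof -
    have "g x * ((exp (2 * t * B x v) - 1) / (2 * t)) = (1 / (2 * t)) * (g x * exp (2 * B x w) - g x)"
      using \<open>t \<noteq> 0\<close> by (simp add: w_def B_scaleR_right field_simps)
    then show ?thesis
      by (simp only: scaleR_diff_left[symmetric] scaleR_scaleR)
  qed
  moreover have "integrable lborel (\<lambda>x. (g x * exp (2 * B x w)) *\<^sub>R \<phi> x)"
    using integrable_scaleR_right[OF integrable_g_shift_linear[OF L, of w], of "exp (B w w)"]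
    by (simp add: g_mult_exp_B)
  moreover have "integrable lborel (\<lambda>x. g x *\<^sub>R \<phi> x)"
    using integrable_g_shift_linear[OF L, of 0] by simp
  ultimately have "(\<integral>x. (g x * ((exp (2 * t * B x v) - 1) / (2 * t))) *\<^sub>R \<phi> x \<partial>lborel)
      = (1 / (2 * t)) *\<^sub>R ((exp (B w w) * Z) *\<^sub>R \<phi> w)"
    by (simp add: integral_g_exp_B_linear[OF L] integral_g_linear[OF L])
  also have "\<dots> = (exp (t\<^sup>2 * B v v) * (Z / 2)) *\<^sub>R \<phi> v"
    using \<open>t \<noteq> 0\<close> by (simp add: w_def B_scaleR_left B_scaleR_right linear_scale[OF L] power2_eq_square)
  finally show ?thesis .
qed

lemma norm_g_exp_B_difference_quotient_le:
  fixes \<phi> :: "'v \<Rightarrow> 'b::real_normed_vector"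
  assumes t: "0 < t" "t \<le> 1"
  shows "norm ((g x * ((exp (2 * t * B x v) - 1) / (2 * t))) *\<^sub>R \<phi> x)
    \<le> exp (B v v) * (g (x - v) + g (x + v)) * (norm (\<phi> x) * \<bar>B x v\<bar>)"
proof -
  have "\<bar>exp (2 * t * B x v) - 1\<bar> \<le> \<bar>2 * t * B x v\<bar> * exp \<bar>2 * t * B x v\<bar>"
    by (rule abs_exp_minus_one_le)
  also have "\<dots> \<le> (2 * t * \<bar>B x v\<bar>) * exp (2 * \<bar>B x v\<bar>)"
    using t by (intro mult_mono) (auto simp: abs_mult mult_left_le_one_le)
  finally have "\<bar>(exp (2 * t * B x v) - 1) / (2 * t)\<bar> \<le> \<bar>B x v\<bar> * exp (2 * \<bar>B x v\<bar>)"
    using t by (simp add: divide_le_eq abs_divide mult_ac)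
  also have "\<dots> \<le> \<bar>B x v\<bar> * (exp (2 * B x v) + exp (2 * B x (- v)))"
    using exp_gt_zero[of "2 * B x v"] exp_gt_zero[of "- (2 * B x v)"]
    by (intro mult_left_mono) (auto simp: B_minus_right abs_if)
  finally have quotient: "\<bar>(exp (2 * t * B x v) - 1) / (2 * t)\<bar>
      \<le> \<bar>B x v\<bar> * (exp (2 * B x v) + exp (2 * B x (- v)))" .
  have "norm ((g x * ((exp (2 * t * B x v) - 1) / (2 * t))) *\<^sub>R \<phi> x)
      = g x * \<bar>(exp (2 * t * B x v) - 1) / (2 * t)\<bar> * norm (\<phi> x)"
    using g_pos[of x] by (simp add: abs_mult)
  also have "\<dots> \<le> g x * (\<bar>B x v\<bar> * (exp (2 * B x v) + exp (2 * B x (- v)))) * norm (\<phi> x)"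
    using g_pos[of x] quotient by (intro mult_right_mono mult_left_mono) auto
  also have "\<dots> = (g x * exp (2 * B x v) + g x * exp (2 * B x (- v))) * (norm (\<phi> x) * \<bar>B x v\<bar>)"
    by (simp add: algebra_simps)
  also have "\<dots> = exp (B v v) * (g (x - v) + g (x + v)) * (norm (\<phi> x) * \<bar>B x v\<bar>)"
  proof -
    have "g x * exp (2 * B x (- v)) = exp (B v v) * g (x + v)"
      using g_mult_exp_B[of x "- v"] by (simp add: B_minus_left B_minus_right)
    then show ?thesis
      by (unfold g_mult_exp_B[of x v]) (simp add: algebra_simps)
  qed
  finally show ?thesis .
qed

text \<open>Stein's identity. It is the derivative at \<open>t = 0\<close> of \<open>integral_g_exp_B_linear\<close> with
  \<open>w = t *\<^sub>R v\<close>; the difference quotients converge by dominated convergence.\<close>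

lemma integral_g_B_linear:
  fixes \<phi> :: "'v \<Rightarrow> 'b::{banach, second_countable_topology}"
  assumes L: "linear \<phi>"
  shows "(\<integral>x. (g x * B x v) *\<^sub>R \<phi> x \<partial>lborel) = (Z / 2) *\<^sub>R \<phi> v"
proof -
  note [measurable] = borel_measurable_linear[OF L] borel_measurable_linear[OF linear_B_left]
  define t where "t k = inverse (real (Suc k))" for k
  have t: "0 < t k" "t k \<le> 1" for k
    by (simp_all add: t_def inverse_le_1_iff)
  define q where "q k x = (g x * ((exp (2 * t k * B x v) - 1) / (2 * t k))) *\<^sub>R \<phi> x" for k x
  define W where "W x = exp (B v v) * (g (x - v) + g (x + v)) * (norm (\<phi> x) * \<bar>B x v\<bar>)" for x
  have "integrable lborel W"
  proof -
    obtain K where "\<And>x. norm (\<phi> x) * norm (B x v) \<le> K * (1 + norm x)\<^sup>2"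
      using linear_mult_norm_bound[OF L linear_B_left] by blast
    then have "integrable lborel (\<lambda>x. g (x - u) * (norm (\<phi> x) * \<bar>B x v\<bar>))" for u
      using integrable_g_shift_scaleR[where K=K and h="\<lambda>x. norm (\<phi> x) * \<bar>B x v\<bar>"] by simp
    from this[of v] this[of "- v"] show ?thesis
      unfolding W_def by (simp add: distrib_right mult.assoc)
  qed
  moreover have "(\<lambda>k. q k x) \<longlonglongrightarrow> (g x * B x v) *\<^sub>R \<phi> x" for x
    unfolding q_def t_def by (intro tendsto_scaleR tendsto_mult tendsto_const exp_difference_quotient_tendsto)
  moreover have "norm (q k x) \<le> W x" for k x
    unfolding q_def W_def by (rule norm_g_exp_B_difference_quotient_le[OF t])
  ultimately have "(\<lambda>k. \<integral>x. q k x \<partial>lborel) \<longlonglongrightarrow> (\<integral>x. (g x * B x v) *\<^sub>R \<phi> x \<partial>lborel)"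
    by (intro integral_dominated_convergence[where w=W] AE_I2) (auto simp: q_def)
  moreover have "(\<lambda>k. \<integral>x. q k x \<partial>lborel) \<longlonglongrightarrow> (exp (0\<^sup>2 * B v v) * (Z / 2)) *\<^sub>R \<phi> v"
    unfolding q_def integral_g_exp_B_difference_quotient[OF L less_imp_neq[OF t(1), symmetric]]
    unfolding t_def by (intro tendsto_intros LIMSEQ_inverse_real_of_nat)
  ultimately show ?thesis
    using LIMSEQ_unique by auto
qed

end

section \<open>Complex matrices and Hermitian forms\<close>

lemma matrix_vector_mult_nth: "(M *v x) $ i = (\<Sum>j\<in>UNIV. M $ i $ j * x $ j)"
  by (simp add: matrix_vector_mult_def)

lemma matrix_matrix_mult_nth: "(A ** B) $ i $ j = (\<Sum>k\<in>UNIV. A $ i $ k * B $ k $ j)"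
  by (simp add: matrix_matrix_mult_def)

lemma
  fixes A :: "'a::semiring_1^'n^'m"
  assumes "invertible A"
  shows matrix_inv_right: "A ** matrix_inv A = mat 1"
    and matrix_inv_left: "matrix_inv A ** A = mat 1"
proof -
  have "\<exists>A'. A ** A' = mat 1 \<and> A' ** A = mat 1"
    using assms unfolding invertible_def by blast
  from someI_ex[OF this] show "A ** matrix_inv A = mat 1" "matrix_inv A ** A = mat 1"
    unfolding matrix_inv_def by auto
qed

lemma matrix_inv_mult_vector_cancel:
  "invertible A \<Longrightarrow> matrix_inv A *v (A *v x) = x"
  by (simp add: matrix_vector_mul_assoc matrix_inv_left)

lemma mult_matrix_inv_vector_cancel:
  "invertible A \<Longrightarrow> A *v (matrix_inv A *v x) = x"
  by (simp add: matrix_vector_mul_assoc matrix_inv_right)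

lemma complex_matrix_vector_mult_scaleR:
  "(Q :: complex^'a^'b) *v (c *\<^sub>R v) = c *\<^sub>R (Q *v v)"
  by (simp add: vec_eq_iff matrix_vector_mult_nth scaleR_sum_right)

lemma adj_nth [simp]: "adj A $ i $ j = cnj (A $ j $ i)"
  by (simp add: adj_def)

lemma adj_adj [simp]: "adj (adj A) = A"
  by (simp add: vec_eq_iff)

lemma adj_matrix_mult: "adj (A ** B) = adj B ** adj A"
  by (simp add: vec_eq_iff matrix_matrix_mult_def mult.commute)

lemma hermitian_matrix_inv:
  fixes M :: "complex^'n^'n"
  assumes herm: "adj M = M" and inv: "invertible M"
  shows "adj (matrix_inv M) = matrix_inv M"
proof -
  have "adj (matrix_inv M) ** M = mat 1"
    using arg_cong[OF matrix_inv_right[OF inv], of adj]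
    by (simp add: adj_matrix_mult herm vec_eq_iff mat_def)
  then have "adj (matrix_inv M) = adj (matrix_inv M) ** (M ** matrix_inv M)"
    by (simp add: matrix_inv_right[OF inv])
  also have "\<dots> = matrix_inv M"
    by (simp add: matrix_mul_assoc \<open>adj (matrix_inv M) ** M = mat 1\<close>)
  finally show ?thesis .
qed

definition cinner :: "complex^'m \<Rightarrow> complex^'m \<Rightarrow> complex" where
  "cinner w v = (\<Sum>i\<in>UNIV. cnj (w $ i) * v $ i)"

lemma Re_cinner: "Re (cinner w v) = w \<bullet> v"
  by (simp add: cinner_def inner_vec_def inner_complex_def Re_sum)

lemma cinner_commute: "cinner w v = cnj (cinner v w)"
  by (simp add: cinner_def mult.commute)

lemma cinner_matrix_vector_mult: "cinner w (Q *v v) = cinner (adj Q *v w) v"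
proof -
  have "cinner w (Q *v v) = (\<Sum>i\<in>UNIV. \<Sum>k\<in>UNIV. cnj (w $ i) * Q $ i $ k * v $ k)"
    by (simp add: cinner_def matrix_vector_mult_nth sum_distrib_left mult.assoc)
  also have "\<dots> = (\<Sum>k\<in>UNIV. \<Sum>i\<in>UNIV. cnj (w $ i) * Q $ i $ k * v $ k)"
    by (rule sum.swap)
  also have "\<dots> = cinner (adj Q *v w) v"
    by (simp add: cinner_def matrix_vector_mult_nth sum_distrib_right sum_distrib_left mult_ac)
  finally show ?thesis .
qed

lemma hform_eq_cinner: "hform w M = cinner w (M *v w)"
  by (simp add: hform_def cinner_def)

lemma inner_hform_expand:
  "x \<bullet> (M *v x) = Re (\<Sum>a\<in>UNIV. \<Sum>b\<in>UNIV. M $ a $ b * (x $ b * cnj (x $ a)))"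
  by (simp add: Re_cinner[symmetric] cinner_def matrix_vector_mult_nth sum_distrib_left mult_ac)

lemma inner_hermitian_commute:
  assumes "adj M = M"
  shows "u \<bullet> (M *v v) = v \<bullet> (M *v u)"
proof -
  have "cinner u (M *v v) = cinner (M *v u) v"
    using cinner_matrix_vector_mult[of u M v] assms by simp
  also have "\<dots> = cnj (cinner v (M *v u))"
    by (rule cinner_commute)
  finally show ?thesis
    using arg_cong[of _ _ Re] by (simp add: Re_cinner[symmetric])
qed

text \<open>Minimise the quadratic form along \<open>u + \<tau> *\<^sub>R z\<close>.\<close>

lemma hermitian_psd_null_vector:
  fixes M :: "complex^'m^'m"
  assumes herm: "adj M = M" and psd: "\<And>u. 0 \<le> u \<bullet> (M *v u)" and u0: "u \<bullet> (M *v u) = 0"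
  shows "z \<bullet> (M *v u) = 0"
proof (rule ccontr)
  define a where "a = z \<bullet> (M *v u)"
  define q where "q = z \<bullet> (M *v z)"
  define \<tau> where "\<tau> = - a / (q + 1)"
  assume "z \<bullet> (M *v u) \<noteq> 0"
  then have "a \<noteq> 0" by (simp add: a_def)
  have "q \<ge> 0" using psd by (simp add: q_def)
  have "(u + \<tau> *\<^sub>R z) \<bullet> (M *v (u + \<tau> *\<^sub>R z)) = 2 * \<tau> * a + \<tau>\<^sup>2 * q"
    using inner_hermitian_commute[OF herm, of u z] u0
    by (simp add: matrix_vector_right_distrib complex_matrix_vector_mult_scaleR inner_add_left
        inner_add_right a_def q_def power2_eq_square algebra_simps)
  also have "\<dots> < 0"
  proof -
    have \<tau>: "\<tau> * (q + 1) = - a"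
      using \<open>q \<ge> 0\<close> by (simp add: \<tau>_def)
    have "(q + 1)\<^sup>2 * (2 * \<tau> * a + \<tau>\<^sup>2 * q) = 2 * a * (q + 1) * (\<tau> * (q + 1)) + (\<tau> * (q + 1))\<^sup>2 * q"
      by (simp add: power2_eq_square algebra_simps)
    also have "\<dots> = - (a\<^sup>2 * (q + 2))"
      unfolding \<tau> by (simp add: power2_eq_square algebra_simps)
    also have "\<dots> < 0"
      using \<open>a \<noteq> 0\<close> \<open>q \<ge> 0\<close> by (simp add: mult_pos_pos)
    finally show ?thesis
      by (simp add: mult_less_0_iff)
  qed
  finally show False
    using psd[of "u + \<tau> *\<^sub>R z"] by simp
qed

lemma hermitian_psd_invertible_pos:
  fixes M :: "complex^'m^'m"
  assumes herm: "adj M = M" and inv: "invertible M" and psd: "\<And>u. 0 \<le> u \<bullet> (M *v u)"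
    and "u \<noteq> 0"
  shows "0 < u \<bullet> (M *v u)"
proof (rule ccontr)
  assume "\<not> 0 < u \<bullet> (M *v u)"
  then have "u \<bullet> (M *v u) = 0"
    using psd[of u] by simp
  from hermitian_psd_null_vector[OF herm psd this, of "M *v u"] have "M *v u = 0"
    by simp
  then have "u = 0"
    using matrix_inv_mult_vector_cancel[OF inv, of u] by simp
  with \<open>u \<noteq> 0\<close> show False by simp
qed

lemma hermitian_psd_invertible_inv_pos:
  fixes M :: "complex^'m^'m"
  assumes herm: "adj M = M" and inv: "invertible M" and psd: "\<And>u. 0 \<le> u \<bullet> (M *v u)"
    and "w \<noteq> 0"
  shows "0 < w \<bullet> (matrix_inv M *v w)"
proof -
  define u where "u = matrix_inv M *v w"
  have w: "w = M *v u"
    by (simp add: u_def mult_matrix_inv_vector_cancel[OF inv])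
  then have "u \<noteq> 0"
    using \<open>w \<noteq> 0\<close> by auto
  then have "0 < u \<bullet> (M *v u)"
    by (rule hermitian_psd_invertible_pos[OF herm inv psd])
  then show ?thesis
    by (simp add: w matrix_inv_mult_vector_cancel[OF inv] inner_commute)
qed

lemma Re_mat_mult_vector_nth: "(Re_mat M *v r) $ i = Re ((M *v cplx_vec r) $ i)"
  by (simp add: Re_mat_def cplx_vec_def matrix_vector_mult_nth Re_sum)

lemma inner_Re_mat: "x \<bullet> (Re_mat M *v r) = cplx_vec x \<bullet> (M *v cplx_vec r)"
  by (simp add: inner_vec_def inner_complex_def cplx_vec_def Re_mat_mult_vector_nth)

lemma sum_matrix_vector_mult: "(\<Sum>n\<in>S. M n) *v x = (\<Sum>n\<in>S. M n *v x)"
  by (induction S rule: infinite_finite_induct) (auto simp: matrix_vector_mult_add_rdistrib)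

lemma inner_cplx_vec: "z \<bullet> cplx_vec r = (\<chi> i. Re (z $ i)) \<bullet> r"
  by (simp add: inner_vec_def inner_complex_def cplx_vec_def)

lemma cplx_mat_mult_vector_nth:
  "(cplx_mat R *v p) $ j
     = of_real ((R *v (\<chi> k. Re (p $ k))) $ j) - \<i> * of_real ((R *v (\<chi> k. Re (p $ k * \<i>))) $ j)"
  by (simp add: complex_eq_iff cplx_mat_def matrix_vector_mult_nth Re_sum Im_sum sum_negf)

lemma linear_vec_nth: "linear (\<lambda>x::'a::real_vector^'n. x $ n)"
  by (rule linearI) simp_all

lemma linear_vec_nth_nth: "linear (\<lambda>x::'a::real_vector^'m^'n. x $ n $ b)"
  by (rule linearI) simp_all

lemma hermitian_Cmat:
  assumes "herm_psd_fun f"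
  shows "adj (Cmat f s t) = Cmat f s t"
proof -
  have "cnj (f a b) = f b a" for a b
    using assms unfolding herm_psd_fun_def by (metis complex_cnj_cnj)
  then show ?thesis
    by (simp add: vec_eq_iff Cmat_def)
qed

lemma sum_nth_distinct_UNIV:
  fixes F :: "'a::finite \<Rightarrow> 'b::comm_monoid_add"
  assumes "distinct es" "set es = UNIV"
  shows "(\<Sum>i<length es. F (es ! i)) = (\<Sum>m\<in>UNIV. F m)"
  using sum.reindex_bij_betw[OF bij_betw_nth[OF assms(1) refl assms(2)[symmetric]], of F] by simp

lemma inner_Cmat_nonneg:
  fixes s :: "'m::finite \<Rightarrow> real"
  assumes "herm_psd_fun f"
  shows "0 \<le> u \<bullet> (Cmat f s t *v u)"
proof -
  obtain es :: "'m list" where es: "distinct es" "set es = UNIV"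
    using finite_distinct_list[OF finite[of "UNIV::'m set"]] by blast
  have double_sum: "(\<Sum>i<length es. \<Sum>j<length es. K (es ! i) (es ! j)) = (\<Sum>a\<in>UNIV. \<Sum>b\<in>UNIV. K a b)"
    for K :: "'m \<Rightarrow> 'm \<Rightarrow> complex"
  proof -
    have "(\<Sum>j<length es. K a (es ! j)) = (\<Sum>b\<in>UNIV. K a b)" for a
      by (rule sum_nth_distinct_UNIV[OF es])
    then show ?thesis
      using sum_nth_distinct_UNIV[OF es, of "\<lambda>a. \<Sum>b\<in>UNIV. K a b"] by simp
  qed
  define xs where "xs = map (\<lambda>m. s m + t) es"
  define c where "c = map (\<lambda>m. u $ m) es"
  have "length c = length xs"
    by (simp add: xs_def c_def)
  then have "0 \<le> Re (\<Sum>i<length xs. \<Sum>j<length xs. cnj (c ! i) * c ! j * f (xs ! i) (xs ! j))"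
    using conjunct2[OF assms[unfolded herm_psd_fun_def]] by blast
  also have "(\<Sum>i<length xs. \<Sum>j<length xs. cnj (c ! i) * c ! j * f (xs ! i) (xs ! j))
      = (\<Sum>a\<in>UNIV. \<Sum>b\<in>UNIV. cnj (u $ a) * u $ b * f (s a + t) (s b + t))"
    using double_sum[of "\<lambda>a b. cnj (u $ a) * u $ b * f (s a + t) (s b + t)"]
    by (simp add: xs_def c_def)
  also have "\<dots> = cinner u (Cmat f s t *v u)"
    by (simp add: cinner_def matrix_vector_mult_nth Cmat_def sum_distrib_left mult_ac)
  finally show ?thesis
    by (simp add: Re_cinner)
qed

lemma sum_UNIV_prod_fst_eq:
  fixes F :: "'a::finite \<times> 'b::finite \<Rightarrow> 'c::comm_monoid_add"
  shows "(\<Sum>q\<in>UNIV. if fst q = n then F q else 0) = (\<Sum>m\<in>UNIV. F (n, m))"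
proof -
  have "(\<Sum>q\<in>UNIV. if fst q = n then F q else 0) = (\<Sum>q\<in>UNIV \<times> UNIV. if fst q = n then F q else 0)"
    by simp
  also have "\<dots> = (\<Sum>n'\<in>UNIV. \<Sum>m\<in>UNIV. if n' = n then F (n', m) else 0)"
    unfolding sum.cartesian_product by (intro sum.cong) auto
  also have "\<dots> = (\<Sum>n'\<in>UNIV. if n' = n then (\<Sum>m\<in>UNIV. F (n', m)) else 0)"
    by (intro sum.cong refl) auto
  also have "\<dots> = (\<Sum>m\<in>UNIV. F (n, m))"
    by simp
  finally show ?thesis .
qed

lemma Gamma0_mult_adj_Dmat_nth:
  "(Gamma0 f s \<theta> ** adj (Dmat \<Psi>)) $ (n, b) $ j = (Cmat f s (\<theta> $ n) ** adj (\<Psi> n)) $ b $ j"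
proof -
  have "(Gamma0 f s \<theta> ** adj (Dmat \<Psi>)) $ (n, b) $ j
      = (\<Sum>q\<in>UNIV. if fst q = n then Cmat f s (\<theta> $ n) $ b $ snd q * cnj (\<Psi> n $ j $ snd q) else 0)"
    by (simp add: matrix_matrix_mult_nth Gamma0_def Dmat_def if_distrib if_distribR eq_commute
        cong: if_cong)
  then show ?thesis
    by (simp add: sum_UNIV_prod_fst_eq matrix_matrix_mult_nth)
qed

lemma Dmat_mult_Gamma0_nth:
  "(Dmat \<Psi> ** Gamma0 f s \<theta>) $ k $ (n, a) = (\<Psi> n ** Cmat f s (\<theta> $ n)) $ k $ a"
proof -
  have "(Dmat \<Psi> ** Gamma0 f s \<theta>) $ k $ (n, a)
      = (\<Sum>q\<in>UNIV. if fst q = n then \<Psi> n $ k $ snd q * Cmat f s (\<theta> $ n) $ snd q $ a else 0)"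
    by (simp add: matrix_matrix_mult_nth Gamma0_def Dmat_def if_distrib if_distribR cong: if_cong)
  then show ?thesis
    by (simp add: sum_UNIV_prod_fst_eq matrix_matrix_mult_nth)
qed

lemma Gamma_blk_eq:
  "Gamma_blk f s \<Psi> \<sigma> \<theta> n = Cmat f s (\<theta> $ n)
     - (1/4) *\<^sub>R (Cmat f s (\<theta> $ n) ** adj (\<Psi> n) ** cplx_mat (matrix_inv (Cy f s \<Psi> \<sigma> \<theta>))
                  ** \<Psi> n ** Cmat f s (\<theta> $ n))"
proof -
  define G0 where "G0 = Gamma0 f s \<theta>"
  define D where "D = Dmat \<Psi>"
  define R where "R = cplx_mat (matrix_inv (Cy f s \<Psi> \<sigma> \<theta>))"
  define C where "C = Cmat f s (\<theta> $ n)"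
  have "(G0 ** adj D ** R ** D ** G0) $ (n, b) $ (n, a) = (C ** adj (\<Psi> n) ** R ** \<Psi> n ** C) $ b $ a"
    for a b
  proof -
    have right: "(R ** (D ** G0)) $ j $ (n, a) = (R ** (\<Psi> n ** C)) $ j $ a" for j
      by (simp only: matrix_matrix_mult_nth[of R] D_def G0_def C_def Dmat_mult_Gamma0_nth)
    have "((G0 ** adj D) ** (R ** (D ** G0))) $ (n, b) $ (n, a)
        = ((C ** adj (\<Psi> n)) ** (R ** (\<Psi> n ** C))) $ b $ a"
      by (simp only: matrix_matrix_mult_nth[of "G0 ** adj D"] matrix_matrix_mult_nth[of "C ** adj (\<Psi> n)"]
          right) (simp only: G0_def D_def C_def Gamma0_mult_adj_Dmat_nth)
    then show ?thesis
      by (simp add: matrix_mul_assoc)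
  qed
  then show ?thesis
    by (simp add: vec_eq_iff Gamma_blk_def Gamma_def Gamma0_def G0_def D_def R_def C_def)
qed

section \<open>The posterior at the current estimate\<close>

locale em_model =
  fixes \<Psi> :: "'n::finite \<Rightarrow> complex^'m::finite^'n" and \<sigma> :: real
    and f :: "real \<Rightarrow> real \<Rightarrow> complex" and s :: "'m \<Rightarrow> real"
    and y :: "real^'n" and thold :: "real^'n"
  assumes \<sigma>_pos: "\<sigma> > 0"
    and herm_psd_f: "herm_psd_fun f"
    and invertible_C: "\<And>n. invertible (Cmat f s (thold $ n))"
begin

definition Cn :: "'n \<Rightarrow> complex^'m^'m" where
  "Cn n = Cmat f s (thold $ n)"

definition Pn :: "'n \<Rightarrow> complex^'m^'m" where
  "Pn n = matrix_inv (Cn n)"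

definition re_synth :: "complex^'m^'n \<Rightarrow> real^'n" where
  "re_synth W = (\<chi> j. Re ((\<Sum>n\<in>UNIV. \<Psi> n *v W $ n) $ j))"

definition \<kappa> :: real where
  "\<kappa> = 1 / (2 * \<sigma>\<^sup>2)"

text \<open>The posterior precision form: given \<open>y\<close>, the density of \<open>W\<close> is proportional to
  \<open>exp (- post_form (W - \<mu>) (W - \<mu>))\<close>.\<close>

definition post_form :: "complex^'m^'n \<Rightarrow> complex^'m^'n \<Rightarrow> real" where
  "post_form W V = (\<Sum>n\<in>UNIV. W $ n \<bullet> (Pn n *v V $ n)) + \<kappa> * (re_synth W \<bullet> re_synth V)"

lemma hermitian_Cn: "adj (Cn n) = Cn n"
  by (simp add: Cn_def hermitian_Cmat[OF herm_psd_f])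

lemma invertible_Cn: "invertible (Cn n)"
  by (simp add: Cn_def invertible_C)

lemma hermitian_Pn: "adj (Pn n) = Pn n"
  by (simp add: Pn_def hermitian_matrix_inv[OF hermitian_Cn invertible_Cn])

lemma Pn_Cn_mult: "Pn n *v (Cn n *v v) = v"
  by (simp add: Pn_def matrix_inv_mult_vector_cancel[OF invertible_Cn])

lemma inner_Pn_pos: "w \<noteq> 0 \<Longrightarrow> 0 < w \<bullet> (Pn n *v w)"
  unfolding Pn_def Cn_def
  by (rule hermitian_psd_invertible_inv_pos[OF hermitian_Cmat[OF herm_psd_f] invertible_C
        inner_Cmat_nonneg[OF herm_psd_f]])

lemma inner_Pn_nonneg: "0 \<le> w \<bullet> (Pn n *v w)"
  using inner_Pn_pos[of w n] by (cases "w = 0") auto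

lemma \<kappa>_pos: "\<kappa> > 0"
  using \<sigma>_pos by (simp add: \<kappa>_def)

lemma \<kappa>_mult_\<sigma>_square: "\<kappa> * \<sigma>\<^sup>2 = 1 / 2"
  using \<sigma>_pos by (simp add: \<kappa>_def)

lemma linear_re_synth: "linear re_synth"
  by (rule linearI)
    (simp_all add: re_synth_def vec_eq_iff matrix_vector_right_distrib sum.distrib
      complex_matrix_vector_mult_scaleR scaleR_sum_right[symmetric])

lemma linear_post_form: "linear (post_form W)"
proof (rule linearI)
  show "post_form W (a + b) = post_form W a + post_form W b" for a b
    by (simp add: post_form_def linear_add[OF linear_re_synth] matrix_vector_right_distrib
        inner_add_right sum.distrib algebra_simps)
  show "post_form W (c *\<^sub>R a) = c *\<^sub>R post_form W a" for c a
    by (simp add: post_form_def linear_scale[OF linear_re_synth] complex_matrix_vector_mult_scaleR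
        sum_distrib_left algebra_simps)
qed

lemma post_form_commute: "post_form W V = post_form V W"
  by (simp add: post_form_def inner_hermitian_commute[OF hermitian_Pn] inner_commute)

lemma post_form_pos:
  assumes "W \<noteq> 0"
  shows "0 < post_form W W"
proof -
  obtain n0 where "W $ n0 \<noteq> 0"
    using assms by (auto simp: vec_eq_iff)
  then have "0 < W $ n0 \<bullet> (Pn n0 *v W $ n0)"
    by (rule inner_Pn_pos)
  also have "\<dots> \<le> (\<Sum>n\<in>UNIV. W $ n \<bullet> (Pn n *v W $ n))"
    by (rule member_le_sum) (simp_all add: inner_Pn_nonneg)
  also have "\<dots> \<le> post_form W W"
    using \<kappa>_pos by (simp add: post_form_def)
  finally show ?thesis .
qed

sublocale G: gaussian_form post_form
proof
  show "bilinear post_form"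
    unfolding bilinear_def using linear_post_form post_form_commute by presburger
qed (simp_all add: post_form_commute post_form_pos)

definition Csum :: "complex^'n^'n" where
  "Csum = (\<Sum>n\<in>UNIV. \<Psi> n ** Cn n ** adj (\<Psi> n))"

definition Cy0_inv :: "real^'n^'n" where
  "Cy0_inv = matrix_inv (Cy f s \<Psi> \<sigma> thold)"

lemma Cy_thold_mult: "Cy f s \<Psi> \<sigma> thold *v r = \<sigma>\<^sup>2 *\<^sub>R r + (1/2) *\<^sub>R (Re_mat Csum *v r)"
  by (simp add: Cy_def Csum_def Cn_def matrix_vector_mult_add_rdistrib
      scaleR_matrix_vector_assoc[symmetric])

lemma inner_Re_mat_Csum_nonneg: "0 \<le> r \<bullet> (Re_mat Csum *v r)"
proof -
  define v where "v = cplx_vec r"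
  have "cplx_vec r \<bullet> ((\<Psi> n ** Cn n ** adj (\<Psi> n)) *v v) = (adj (\<Psi> n) *v v) \<bullet> (Cn n *v (adj (\<Psi> n) *v v))" for n
    by (simp add: v_def Re_cinner[symmetric] cinner_matrix_vector_mult matrix_vector_mul_assoc[symmetric])
  then have "r \<bullet> (Re_mat Csum *v r) = (\<Sum>n\<in>UNIV. (adj (\<Psi> n) *v v) \<bullet> (Cn n *v (adj (\<Psi> n) *v v)))"
    by (simp add: inner_Re_mat Csum_def v_def sum_matrix_vector_mult inner_sum_right)
  also have "\<dots> \<ge> 0"
    by (intro sum_nonneg) (simp add: Cn_def inner_Cmat_nonneg[OF herm_psd_f])
  finally show ?thesis .
qed

lemma invertible_Cy_thold: "invertible (Cy f s \<Psi> \<sigma> thold)"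
  unfolding invertible_left_inverse matrix_left_invertible_injective
proof (rule injI)
  fix a b
  assume "Cy f s \<Psi> \<sigma> thold *v a = Cy f s \<Psi> \<sigma> thold *v b"
  then have "Cy f s \<Psi> \<sigma> thold *v (a - b) = 0"
    by (simp add: matrix_vector_mult_diff_distrib)
  then have "0 = (a - b) \<bullet> (Cy f s \<Psi> \<sigma> thold *v (a - b))"
    by simp
  also have "\<dots> = \<sigma>\<^sup>2 * ((a - b) \<bullet> (a - b)) + (1/2) * ((a - b) \<bullet> (Re_mat Csum *v (a - b)))"
    by (simp add: Cy_thold_mult inner_add_right)
  finally have "\<sigma>\<^sup>2 * ((a - b) \<bullet> (a - b)) = 0"
    using inner_Re_mat_Csum_nonneg[of "a - b"] mult_nonneg_nonneg[OF zero_le_power2[of \<sigma>] inner_ge_zero[of "a - b"]]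
    by linarith
  then show "a = b"
    using \<sigma>_pos by simp
qed

lemma Re_mat_Csum_Cy0_inv: "Re_mat Csum *v (Cy0_inv *v c) = 2 *\<^sub>R (c - \<sigma>\<^sup>2 *\<^sub>R (Cy0_inv *v c))"
proof -
  have "c = \<sigma>\<^sup>2 *\<^sub>R (Cy0_inv *v c) + (1/2) *\<^sub>R (Re_mat Csum *v (Cy0_inv *v c))"
    using mult_matrix_inv_vector_cancel[OF invertible_Cy_thold, of c]
    by (simp add: Cy0_inv_def Cy_thold_mult)
  then have "c - \<sigma>\<^sup>2 *\<^sub>R (Cy0_inv *v c) = (1/2) *\<^sub>R (Re_mat Csum *v (Cy0_inv *v c))"
    by (simp add: algebra_simps)
  then show ?thesis
    by simp
qed

definition backproj :: "real^'n \<Rightarrow> complex^'m^'n" where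
  "backproj r = (\<chi> n. (Cn n ** adj (\<Psi> n)) *v cplx_vec r)"

lemma re_synth_backproj: "re_synth (backproj r) = Re_mat Csum *v r"
  by (simp add: vec_eq_iff re_synth_def backproj_def Csum_def Re_mat_mult_vector_nth
      sum_matrix_vector_mult matrix_vector_mul_assoc matrix_mul_assoc)

lemma inner_Pn_backproj: "backproj r $ n \<bullet> (Pn n *v x) = (\<Psi> n *v x) \<bullet> cplx_vec r"
proof -
  have "backproj r $ n \<bullet> (Pn n *v x) = x \<bullet> (Pn n *v (Cn n *v (adj (\<Psi> n) *v cplx_vec r)))"
    by (simp add: backproj_def inner_hermitian_commute[OF hermitian_Pn] matrix_vector_mul_assoc)
  also have "\<dots> = (\<Psi> n *v x) \<bullet> cplx_vec r"
    by (simp add: Pn_Cn_mult Re_cinner[symmetric] cinner_matrix_vector_mult)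
  finally show ?thesis .
qed

lemma post_form_backproj: "post_form (backproj r) x = (r + \<kappa> *\<^sub>R (Re_mat Csum *v r)) \<bullet> re_synth x"
proof -
  have "(\<Sum>n\<in>UNIV. (\<chi> i. Re ((\<Psi> n *v x $ n) $ i))) = re_synth x"
    by (simp add: vec_eq_iff re_synth_def sum_component Re_sum)
  then have "(\<Sum>n\<in>UNIV. backproj r $ n \<bullet> (Pn n *v x $ n)) = re_synth x \<bullet> r"
    by (simp add: inner_Pn_backproj inner_cplx_vec inner_sum_left[symmetric])
  then show ?thesis
    by (simp add: post_form_def re_synth_backproj inner_add_left inner_commute[of r])
qed

lemma post_form_backproj_Cy0_inv: "post_form (backproj (Cy0_inv *v c)) x = 2 * \<kappa> * (c \<bullet> re_synth x)"
proof -
  have "post_form (backproj (Cy0_inv *v c)) x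
      = 2 * \<kappa> * (c \<bullet> re_synth x) + (1 - 2 * (\<kappa> * \<sigma>\<^sup>2)) * ((Cy0_inv *v c) \<bullet> re_synth x)"
    by (simp add: post_form_backproj Re_mat_Csum_Cy0_inv inner_add_left inner_diff_left algebra_simps)
  then show ?thesis
    by (simp add: \<kappa>_mult_\<sigma>_square)
qed

definition prior_cov :: "complex^'m^'n \<Rightarrow> complex^'m^'n" where
  "prior_cov e = (\<chi> n. Cn n *v e $ n)"

definition post_cov :: "complex^'m^'n \<Rightarrow> complex^'m^'n" where
  "post_cov e = prior_cov e - (1/2) *\<^sub>R backproj (Cy0_inv *v re_synth (prior_cov e))"

lemma post_form_prior_cov: "post_form (prior_cov e) x = e \<bullet> x + \<kappa> * (re_synth (prior_cov e) \<bullet> re_synth x)"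
proof -
  have "prior_cov e $ n \<bullet> (Pn n *v x $ n) = e $ n \<bullet> x $ n" for n
    using inner_hermitian_commute[OF hermitian_Pn, of "prior_cov e $ n" n "x $ n"]
    by (simp add: prior_cov_def Pn_Cn_mult inner_commute)
  then show ?thesis
    by (simp add: post_form_def inner_vec_def)
qed

lemma post_form_post_cov: "post_form (post_cov e) x = e \<bullet> x"
  by (simp add: post_cov_def G.B_diff_left G.B_scaleR_left post_form_prior_cov
      post_form_backproj_Cy0_inv)

definition \<mu> :: "complex^'m^'n" where
  "\<mu> = (\<chi> n. w_tilde f s \<Psi> \<sigma> thold y n)"

lemma \<mu>_eq_backproj: "\<mu> = (1/2) *\<^sub>R backproj (Cy0_inv *v y)"
  by (simp add: vec_eq_iff \<mu>_def w_tilde_def backproj_def Cy0_inv_def Cn_def)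

lemma post_form_\<mu>: "post_form \<mu> x = \<kappa> * (y \<bullet> re_synth x)"
  by (simp add: \<mu>_eq_backproj G.B_scaleR_left post_form_backproj_Cy0_inv)

definition misfit :: "complex^'m^'n \<Rightarrow> real" where
  "misfit W = (y - re_synth W) \<bullet> (y - re_synth W)"

lemma lik_density_eq:
  "lik_density \<Psi> \<sigma> y W
     = (1 / sqrt (2 * pi * \<sigma>\<^sup>2)) ^ CARD('n) * exp (- \<kappa> * misfit W)"
proof -
  define c where "c = 1 / sqrt (2 * pi * \<sigma>\<^sup>2)"
  have "normal_density (Re ((\<Sum>n\<in>UNIV. \<Psi> n *v W $ n) $ i)) \<sigma> (y $ i)
      = c * exp (- (\<kappa> * ((y - re_synth W) $ i * (y - re_synth W) $ i)))" for i
    by (simp add: normal_density_def \<kappa>_def c_def re_synth_def power2_eq_square)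
  then have "lik_density \<Psi> \<sigma> y W = (\<Prod>i\<in>UNIV. c * exp (- (\<kappa> * ((y - re_synth W) $ i * (y - re_synth W) $ i))))"
    by (simp add: lik_density_def)
  also have "\<dots> = c ^ CARD('n) * exp (- \<kappa> * misfit W)"
    by (simp add: misfit_def prod.distrib exp_sum[symmetric] inner_vec_def sum_distrib_left sum_negf)
  finally show ?thesis
    by (simp add: c_def)
qed

definition prior_norm :: "real^'n \<Rightarrow> real" where
  "prior_norm \<theta> = (\<Prod>n\<in>UNIV. pi ^ CARD('m) * cmod (det (Cmat f s (\<theta> $ n))))"

lemma prior_norm_pos:
  assumes "\<forall>n. invertible (Cmat f s (\<theta> $ n))"
  shows "prior_norm \<theta> > 0"
proof -
  have "det (Cmat f s (\<theta> $ n)) \<noteq> 0" for n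
    using assms invertible_det_nz by blast
  then show ?thesis
    unfolding prior_norm_def by (intro prod_pos) simp
qed

lemma prior_density_eq:
  "prior_density f s \<theta> W
     = exp (- (\<Sum>n\<in>UNIV. W $ n \<bullet> (matrix_inv (Cmat f s (\<theta> $ n)) *v W $ n))) / prior_norm \<theta>"
  by (simp add: prior_density_def cgauss_density_def prior_norm_def prod_dividef exp_sum[symmetric]
      sum_negf hform_eq_cinner Re_cinner)

lemma ln_joint_density:
  assumes "\<forall>n. invertible (Cmat f s (\<theta> $ n))"
  shows "ln (joint_density f s \<Psi> \<sigma> \<theta> y W)
    = real CARD('n) * ln (1 / sqrt (2 * pi * \<sigma>\<^sup>2)) - \<kappa> * misfit W
      - (\<Sum>n\<in>UNIV. W $ n \<bullet> (matrix_inv (Cmat f s (\<theta> $ n)) *v W $ n)) - ln (prior_norm \<theta>)"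
  unfolding joint_density_def lik_density_eq prior_density_eq
  using prior_norm_pos[OF assms] \<sigma>_pos by (simp add: ln_mult ln_div ln_realpow)

lemma exponent_complete_square:
  "(\<Sum>n\<in>UNIV. W $ n \<bullet> (Pn n *v W $ n)) + \<kappa> * misfit W
     = post_form (W - \<mu>) (W - \<mu>) + (\<kappa> * (y \<bullet> y) - post_form \<mu> \<mu>)"
proof -
  have "post_form (W - \<mu>) (W - \<mu>) = post_form W W - 2 * post_form \<mu> W + post_form \<mu> \<mu>"
    by (simp add: G.B_diff_left G.B_diff_right post_form_commute[of W \<mu>])
  then show ?thesis
    by (simp add: misfit_def post_form_def[of W W] post_form_\<mu> inner_diff_left inner_diff_right
        inner_commute algebra_simps)
qed

lemma joint_density_thold: "\<exists>K>0. \<forall>W. joint_density f s \<Psi> \<sigma> thold y W = K * G.g (W - \<mu>)"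
proof -
  define K where "K = (1 / sqrt (2 * pi * \<sigma>\<^sup>2)) ^ CARD('n) / prior_norm thold
      * exp (- (\<kappa> * (y \<bullet> y) - post_form \<mu> \<mu>))"
  have "joint_density f s \<Psi> \<sigma> thold y W = K * G.g (W - \<mu>)" for W
  proof -
    have "- \<kappa> * misfit W + - (\<Sum>n\<in>UNIV. W $ n \<bullet> (Pn n *v W $ n))
        = - (\<kappa> * (y \<bullet> y) - post_form \<mu> \<mu>) + - post_form (W - \<mu>) (W - \<mu>)"
      using exponent_complete_square[of W] by linarith
    then have "exp (- \<kappa> * misfit W) * exp (- (\<Sum>n\<in>UNIV. W $ n \<bullet> (Pn n *v W $ n)))
        = exp (- (\<kappa> * (y \<bullet> y) - post_form \<mu> \<mu>)) * G.g (W - \<mu>)"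
      by (simp only: mult_exp_exp G.g_def)
    then show ?thesis
      by (simp add: joint_density_def lik_density_eq prior_density_eq K_def Pn_def Cn_def)
  qed
  moreover have "K > 0"
    using prior_norm_pos[of thold] invertible_C \<sigma>_pos by (simp add: K_def)
  ultimately show ?thesis
    by blast
qed

lemma post_density_eq: "post_density f s \<Psi> \<sigma> thold y W = G.g (W - \<mu>) / G.Z"
proof -
  obtain K where "K > 0" and joint: "\<And>W. joint_density f s \<Psi> \<sigma> thold y W = K * G.g (W - \<mu>)"
    using joint_density_thold by blast
  then show ?thesis
    by (simp add: post_density_def joint G.integral_g_shift)
qed

lemma post_mean_eq_w_tilde: "post_mean f s \<Psi> \<sigma> thold y n = w_tilde f s \<Psi> \<sigma> thold y n"
proof -
  note [measurable] = borel_measurable_linear[OF linear_vec_nth]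
  have "post_mean f s \<Psi> \<sigma> thold y n = (\<integral>W. (G.g (W - \<mu>) / G.Z) *\<^sub>R W $ n \<partial>lborel)"
    by (simp add: post_mean_def post_density_eq)
  also have "\<dots> = (\<integral>x. (G.g (\<mu> + x - \<mu>) / G.Z) *\<^sub>R (\<mu> + x) $ n \<partial>lborel)"
    by (rule lborel_integral_translate[symmetric]) measurable
  also have "\<dots> = (\<integral>x. (G.g x / G.Z) *\<^sub>R \<mu> $ n + (1 / G.Z) *\<^sub>R (G.g x *\<^sub>R x $ n) \<partial>lborel)"
    by (simp add: scaleR_add_right)
  also have "\<dots> = (\<integral>x. G.g x / G.Z \<partial>lborel) *\<^sub>R \<mu> $ n + (1 / G.Z) *\<^sub>R (\<integral>x. G.g x *\<^sub>R x $ n \<partial>lborel)"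
  proof -
    have i1: "integrable lborel (\<lambda>x. G.g x / G.Z)"
      using G.integrable_g by simp
    have i2: "integrable lborel (\<lambda>x. G.g x *\<^sub>R x $ n)"
      using G.integrable_g_shift_linear[OF linear_vec_nth, of 0] by simp
    have "(\<integral>x. (G.g x / G.Z) *\<^sub>R \<mu> $ n + (1 / G.Z) *\<^sub>R (G.g x *\<^sub>R x $ n) \<partial>lborel)
        = (\<integral>x. (G.g x / G.Z) *\<^sub>R \<mu> $ n \<partial>lborel) + (\<integral>x. (1 / G.Z) *\<^sub>R (G.g x *\<^sub>R x $ n) \<partial>lborel)"
      by (rule Bochner_Integration.integral_add)
        (rule integrable_scaleR_left[OF i1], rule integrable_scaleR_right[OF i2])
    then show ?thesis
      by (simp only: integral_scaleR_left[OF i1] integral_scaleR_right)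
  qed
  also have "\<dots> = \<mu> $ n"
    using G.Z_pos by (simp add: G.integral_g_linear[OF linear_vec_nth] G.Z_def)
  finally show ?thesis
    by (simp add: \<mu>_def)
qed

section \<open>Second moments of the posterior\<close>

lemma cnj_eq_post_form_post_cov:
  "cnj (x $ n $ a) = of_real (post_form x (post_cov (axis n (axis a 1))))
     - \<i> * of_real (post_form x (post_cov (axis n (axis a \<i>))))"
  by (simp add: post_form_commute[of x] post_form_post_cov inner_axis' inner_complex_def complex_eq_iff)

lemma integrable_g_mult_cnj: "integrable lborel (\<lambda>x. G.g x *\<^sub>R (x $ n $ b * cnj (x $ n $ a)))"
proof -
  have L: "linear (\<lambda>x::complex^'m^'n. cnj (x $ n $ a))"
    by (rule linearI) simp_all
  have [measurable]: "(\<lambda>x. x $ n $ b * cnj (x $ n $ a)) \<in> borel_measurable (borel :: (complex^'m^'n) measure)"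
    using borel_measurable_linear[OF linear_vec_nth_nth[of n b]] borel_measurable_linear[OF L]
    by (rule borel_measurable_times)
  obtain K where K: "\<And>x::complex^'m^'n. norm (x $ n $ b) * norm (cnj (x $ n $ a)) \<le> K * (1 + norm x)\<^sup>2"
    using linear_mult_norm_bound[OF linear_vec_nth_nth[of n b] L] by blast
  have "norm (x $ n $ b * cnj (x $ n $ a)) \<le> K * (1 + norm x)\<^sup>2" for x :: "complex^'m^'n"
    using K[of x] by (simp only: norm_mult)
  from G.integrable_g_shift_scaleR[of _ K 0, OF _ this] show ?thesis
    by simp
qed

lemma integral_g_mult_cnj:
  "(\<integral>x. G.g x *\<^sub>R (x $ n $ b * cnj (x $ n $ a)) \<partial>lborel)
     = (G.Z / 2) * (post_cov (axis n (axis a 1)) $ n $ b - \<i> * post_cov (axis n (axis a \<i>)) $ n $ b)"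
proof -
  define v1 where "v1 = post_cov (axis n (axis a 1))"
  define vi where "vi = post_cov (axis n (axis a \<i>))"
  let ?I = "\<lambda>v. \<integral>x. (G.g x * post_form x v) *\<^sub>R x $ n $ b \<partial>lborel"
  have integrable: "integrable lborel (\<lambda>x. (G.g x * post_form x v) *\<^sub>R x $ n $ b)" for v
    by (rule G.integrable_g_B_linear[OF linear_vec_nth_nth])
  have "G.g x *\<^sub>R (x $ n $ b * cnj (x $ n $ a))
      = (G.g x * post_form x v1) *\<^sub>R x $ n $ b - \<i> * ((G.g x * post_form x vi) *\<^sub>R x $ n $ b)" for x
    by (simp add: cnj_eq_post_form_post_cov v1_def vi_def scaleR_conv_of_real algebra_simps)
  then have "(\<integral>x. G.g x *\<^sub>R (x $ n $ b * cnj (x $ n $ a)) \<partial>lborel)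
      = (\<integral>x. (G.g x * post_form x v1) *\<^sub>R x $ n $ b - \<i> * ((G.g x * post_form x vi) *\<^sub>R x $ n $ b) \<partial>lborel)"
    by (simp only:)
  also have "\<dots> = ?I v1 - \<i> * ?I vi"
    by (simp only: Bochner_Integration.integral_diff[OF integrable integrable_mult_right[OF integrable]]
        integral_mult_right_zero)
  also have "\<dots> = (G.Z / 2) * (v1 $ n $ b - \<i> * vi $ n $ b)"
    unfolding G.integral_g_B_linear[OF linear_vec_nth_nth] by (simp add: scaleR_conv_of_real algebra_simps)
  finally show ?thesis
    by (simp add: v1_def vi_def)
qed

lemma prior_cov_axis_nth: "prior_cov (axis n (axis a c)) $ n $ b = Cn n $ b $ a * c"
  by (simp add: prior_cov_def matrix_vector_mult_nth axis_def if_distrib cong: if_cong)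

lemma re_synth_prior_cov_axis:
  "re_synth (prior_cov (axis n (axis a c))) = (\<chi> k. Re ((\<Psi> n ** Cn n) $ k $ a * c))"
proof -
  have "\<Psi> n' *v prior_cov (axis n (axis a c)) $ n' = (if n' = n then \<Psi> n *v (Cn n *v axis a c) else 0)" for n'
    by (simp add: prior_cov_def axis_def)
  then have "(\<Sum>n'\<in>UNIV. \<Psi> n' *v prior_cov (axis n (axis a c)) $ n') = \<Psi> n *v (Cn n *v axis a c)"
    by simp
  then show ?thesis
    by (simp add: re_synth_def vec_eq_iff matrix_vector_mul_assoc matrix_vector_mult_nth axis_def
        if_distrib matrix_matrix_mult_nth cong: if_cong)
qed

lemma backproj_nth: "backproj r $ n $ b = (\<Sum>j\<in>UNIV. (Cn n ** adj (\<Psi> n)) $ b $ j * of_real (r $ j))"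
  by (simp add: backproj_def matrix_vector_mult_nth cplx_vec_def)

text \<open>The posterior covariances of the real and imaginary parts of \<open>w\<^sub>n\<close> recombine into the
  complex covariance block \<open>\<Gamma>\<^sub>n\<close>.\<close>

lemma post_cov_axis_combination:
  "post_cov (axis n (axis a 1)) $ n $ b - \<i> * post_cov (axis n (axis a \<i>)) $ n $ b
     = 2 * Gamma_blk f s \<Psi> \<sigma> thold n $ b $ a"
proof -
  define H where "H = Cn n ** adj (\<Psi> n)"
  define p where "p = (\<chi> k. (\<Psi> n ** Cn n) $ k $ a)"
  define S where "S c = (\<Sum>j\<in>UNIV. H $ b $ j * of_real ((Cy0_inv *v (\<chi> k. Re (p $ k * c))) $ j))" for c
  have post_cov_nth: "post_cov (axis n (axis a c)) $ n $ b = Cn n $ b $ a * c - (1/2) *\<^sub>R S c" for c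
    by (simp add: post_cov_def prior_cov_axis_nth re_synth_prior_cov_axis backproj_nth H_def p_def S_def)
  have "S 1 - \<i> * S \<i> = (\<Sum>j\<in>UNIV. H $ b $ j * (cplx_mat Cy0_inv *v p) $ j)"
    by (simp add: S_def cplx_mat_mult_vector_nth sum_distrib_left sum_subtractf algebra_simps)
  also have "\<dots> = (H ** (cplx_mat Cy0_inv ** (\<Psi> n ** Cn n))) $ b $ a"
    by (simp add: matrix_matrix_mult_nth matrix_vector_mult_nth p_def)
  also have "\<dots> = (H ** cplx_mat Cy0_inv ** \<Psi> n ** Cn n) $ b $ a"
    by (simp add: matrix_mul_assoc)
  finally have "S 1 - \<i> * S \<i> = (H ** cplx_mat Cy0_inv ** \<Psi> n ** Cn n) $ b $ a" .
  then have "post_cov (axis n (axis a 1)) $ n $ b - \<i> * post_cov (axis n (axis a \<i>)) $ n $ b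
      = 2 * Cn n $ b $ a - (1/2) * (H ** cplx_mat Cy0_inv ** \<Psi> n ** Cn n) $ b $ a"
    unfolding post_cov_nth by (simp add: scaleR_conv_of_real algebra_simps)
  also have "\<dots> = 2 * Gamma_blk f s \<Psi> \<sigma> thold n $ b $ a"
    by (simp add: Gamma_blk_eq H_def Cn_def Cy0_inv_def) (simp add: scaleR_conv_of_real algebra_simps)
  finally show ?thesis .
qed

lemma integral_g_second_moment:
  "(\<integral>x. G.g x *\<^sub>R (x $ n $ b * cnj (x $ n $ a)) \<partial>lborel) = G.Z * Gamma_blk f s \<Psi> \<sigma> thold n $ b $ a"
  by (simp add: integral_g_mult_cnj post_cov_axis_combination)

lemma linear_matrix_vector_mult_nth: "linear (\<lambda>x::complex^'m^'n. M *v x $ n)"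
  by (rule linearI) (simp_all add: matrix_vector_right_distrib complex_matrix_vector_mult_scaleR)

lemma integral_g_hform: "(\<integral>x. G.g x * (x $ n \<bullet> (M *v x $ n)) \<partial>lborel) = G.Z * Re (mtrace (M ** Gamma_blk f s \<Psi> \<sigma> thold n))"
proof -
  let ?m = "\<lambda>a b x. G.g x *\<^sub>R (x $ n $ b * cnj (x $ n $ a))"
  have "G.g x * (x $ n \<bullet> (M *v x $ n)) = Re (\<Sum>a\<in>UNIV. \<Sum>b\<in>UNIV. M $ a $ b * ?m a b x)" for x
    by (simp add: inner_hform_expand scaleR_sum_right sum_distrib_left)
  then have "(\<integral>x. G.g x * (x $ n \<bullet> (M *v x $ n)) \<partial>lborel)
      = (\<integral>x. Re (\<Sum>a\<in>UNIV. \<Sum>b\<in>UNIV. M $ a $ b * ?m a b x) \<partial>lborel)"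
    by (simp only:)
  also have "\<dots> = Re (\<Sum>a\<in>UNIV. \<Sum>b\<in>UNIV. M $ a $ b * (\<integral>x. ?m a b x \<partial>lborel))"
  proof -
    have "integrable lborel (\<lambda>x. M $ a $ b * ?m a b x)" for a b
      using integrable_g_mult_cnj by (rule integrable_mult_right)
    then show ?thesis
      by (simp only: integral_Re Bochner_Integration.integral_sum Bochner_Integration.integrable_sum
          integral_mult_right_zero)
  qed
  also have "\<dots> = G.Z * Re (mtrace (M ** Gamma_blk f s \<Psi> \<sigma> thold n))"
    by (simp add: integral_g_second_moment mtrace_def matrix_matrix_mult_nth sum_distrib_left algebra_simps)
  finally show ?thesis .
qed

lemma integrable_g_hform_shift:
  "integrable lborel (\<lambda>x. G.g x * ((c + x $ n) \<bullet> (M *v (c + x $ n))))"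
  using G.integrable_g_inner_affine[OF linear_vec_nth linear_matrix_vector_mult_nth, where c = c and d = "M *v c"]
  by (simp add: matrix_vector_right_distrib)

lemma integral_g_hform_shift:
  "(\<integral>x. G.g x * ((c + x $ n) \<bullet> (M *v (c + x $ n))) \<partial>lborel)
     = G.Z * (c \<bullet> (M *v c) + Re (mtrace (M ** Gamma_blk f s \<Psi> \<sigma> thold n)))"
proof -
  define L where "L x = c \<bullet> (M *v x $ n) + x $ n \<bullet> (M *v c)" for x :: "complex^'m^'n"
  have "linear L"
    unfolding L_def[abs_def]
    by (rule linearI) (simp_all add: matrix_vector_right_distrib complex_matrix_vector_mult_scaleR
        inner_add_left inner_add_right algebra_simps)
  have quad: "integrable lborel (\<lambda>x. G.g x * (x $ n \<bullet> (M *v x $ n)))"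
    using G.integrable_g_inner_affine[OF linear_vec_nth linear_matrix_vector_mult_nth, where c = 0 and d = 0] by simp
  have "G.g x * ((c + x $ n) \<bullet> (M *v (c + x $ n)))
      = c \<bullet> (M *v c) * G.g x + G.g x * L x + G.g x * (x $ n \<bullet> (M *v x $ n))" for x
    by (simp add: L_def matrix_vector_right_distrib inner_add_left inner_add_right algebra_simps)
  then have "(\<integral>x. G.g x * ((c + x $ n) \<bullet> (M *v (c + x $ n))) \<partial>lborel)
      = c \<bullet> (M *v c) * G.Z + (\<integral>x. G.g x * L x \<partial>lborel) + (\<integral>x. G.g x * (x $ n \<bullet> (M *v x $ n)) \<partial>lborel)"
    using G.integrable_g G.integrable_g_shift_linear[OF \<open>linear L\<close>, of 0] quad by (simp add: G.Z_def)
  then show ?thesis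
    using G.integral_g_linear[OF \<open>linear L\<close>] by (simp add: integral_g_hform algebra_simps)
qed

section \<open>The EM objective\<close>

lemma ln_prior_norm:
  assumes "\<forall>n. invertible (Cmat f s (\<theta> $ n))"
  shows "ln (prior_norm \<theta>)
    = real CARD('n) * ln (pi ^ CARD('m)) + (\<Sum>n\<in>UNIV. ln (cmod (det (Cmat f s (\<theta> $ n)))))"
proof -
  have "det (Cmat f s (\<theta> $ n)) \<noteq> 0" for n
    using assms invertible_det_nz by blast
  then show ?thesis
    by (simp add: prior_norm_def ln_prod ln_mult sum.distrib)
qed

lemma integrable_g_misfit_shift: "integrable lborel (\<lambda>x. G.g x * misfit (\<mu> + x))"
proof -
  have lin: "linear (\<lambda>x. - re_synth x)"
    using linear_compose_neg[OF linear_re_synth] .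
  have "misfit (\<mu> + x) = ((y - re_synth \<mu>) + - re_synth x) \<bullet> ((y - re_synth \<mu>) + - re_synth x)" for x
    by (simp add: misfit_def linear_add[OF linear_re_synth] algebra_simps)
  then show ?thesis
    by (simp only: G.integrable_g_inner_affine[OF lin lin])
qed

lemma EM_Q_eq:
  assumes inv: "\<forall>n. invertible (Cmat f s (\<theta> $ n))"
  shows "EM_Q f s \<Psi> \<sigma> y thold \<theta>
    = real CARD('n) * ln (1 / sqrt (2 * pi * \<sigma>\<^sup>2)) - ln (prior_norm \<theta>)
      - \<kappa> * (\<integral>x. G.g x * misfit (\<mu> + x) \<partial>lborel) / G.Z
      - (\<Sum>n\<in>UNIV. \<mu> $ n \<bullet> (matrix_inv (Cmat f s (\<theta> $ n)) *v \<mu> $ n)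
          + Re (mtrace (matrix_inv (Cmat f s (\<theta> $ n)) ** Gamma_blk f s \<Psi> \<sigma> thold n)))"
proof -
  define c where "c = real CARD('n) * ln (1 / sqrt (2 * pi * \<sigma>\<^sup>2)) - ln (prior_norm \<theta>)"
  define Q where "Q n = matrix_inv (Cmat f s (\<theta> $ n))" for n
  define H where "H n x = G.g x * ((\<mu> $ n + x $ n) \<bullet> (Q n *v (\<mu> $ n + x $ n)))" for n x
  define F where "F W = (G.g (W - \<mu>) / G.Z) * (c - \<kappa> * misfit W - (\<Sum>n\<in>UNIV. W $ n \<bullet> (Q n *v W $ n)))"
    for W
  note [measurable] = borel_measurable_linear[OF linear_re_synth]
    borel_measurable_linear[OF linear_vec_nth] borel_measurable_linear[OF linear_matrix_vector_mult_nth]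
  have [measurable]: "F \<in> borel_measurable borel"
    unfolding F_def[abs_def] misfit_def[abs_def] by measurable
  have i1: "integrable lborel (\<lambda>x. (c / G.Z) * G.g x)"
    by (rule integrable_mult_right[OF G.integrable_g])
  have i2: "integrable lborel (\<lambda>x. (\<kappa> / G.Z) * (G.g x * misfit (\<mu> + x)))"
    by (rule integrable_mult_right[OF integrable_g_misfit_shift])
  have iH: "integrable lborel (H n)" for n
    unfolding H_def by (rule integrable_g_hform_shift)
  have i3: "integrable lborel (\<lambda>x. (1 / G.Z) * (\<Sum>n\<in>UNIV. H n x))"
    by (intro integrable_mult_right Bochner_Integration.integrable_sum iH)
  have EH: "(\<integral>x. H n x \<partial>lborel)
      = G.Z * (\<mu> $ n \<bullet> (Q n *v \<mu> $ n) + Re (mtrace (Q n ** Gamma_blk f s \<Psi> \<sigma> thold n)))" for n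
    unfolding H_def by (rule integral_g_hform_shift)
  have "EM_Q f s \<Psi> \<sigma> y thold \<theta> = (\<integral>W. F W \<partial>lborel)"
    unfolding EM_Q_def post_density_eq ln_joint_density[OF inv] F_def c_def Q_def
    by (intro Bochner_Integration.integral_cong refl) (simp add: algebra_simps)
  also have "\<dots> = (\<integral>x. F (\<mu> + x) \<partial>lborel)"
    by (rule lborel_integral_translate[symmetric]) measurable
  also have "\<dots> = (\<integral>x. (c / G.Z) * G.g x - (\<kappa> / G.Z) * (G.g x * misfit (\<mu> + x))
      - (1 / G.Z) * (\<Sum>n\<in>UNIV. H n x) \<partial>lborel)"
    using G.Z_pos by (intro Bochner_Integration.integral_cong refl)
      (simp add: F_def H_def sum_distrib_left field_simps)
  also have "\<dots> = c - \<kappa> * (\<integral>x. G.g x * misfit (\<mu> + x) \<partial>lborel) / G.Z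
      - (\<Sum>n\<in>UNIV. \<mu> $ n \<bullet> (Q n *v \<mu> $ n) + Re (mtrace (Q n ** Gamma_blk f s \<Psi> \<sigma> thold n)))"
    using G.Z_pos
    by (simp only: Bochner_Integration.integral_diff[OF Bochner_Integration.integrable_diff[OF i1 i2] i3]
        Bochner_Integration.integral_diff[OF i1 i2] integral_mult_right_zero
        Bochner_Integration.integral_sum[OF iH] EH G.Z_def[symmetric]) (simp add: sum_distrib_left)
  finally show ?thesis
    by (simp add: c_def Q_def)
qed

lemma EM_Q_separable:
  "\<exists>K. \<forall>\<theta>. (\<forall>n. invertible (Cmat f s (\<theta> $ n))) \<longrightarrow>
      EM_Q f s \<Psi> \<sigma> y thold \<theta> = K - (\<Sum>n\<in>UNIV. Qkn f s \<Psi> \<sigma> thold y n (\<theta> $ n))"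
proof -
  define K where "K = real CARD('n) * ln (1 / sqrt (2 * pi * \<sigma>\<^sup>2)) - real CARD('n) * ln (pi ^ CARD('m))
    - \<kappa> * (\<integral>x. G.g x * misfit (\<mu> + x) \<partial>lborel) / G.Z"
  have "EM_Q f s \<Psi> \<sigma> y thold \<theta> = K - (\<Sum>n\<in>UNIV. Qkn f s \<Psi> \<sigma> thold y n (\<theta> $ n))"
    if "\<forall>n. invertible (Cmat f s (\<theta> $ n))" for \<theta>
    by (simp add: EM_Q_eq[OF that] ln_prior_norm[OF that] K_def Qkn_def hform_eq_cinner Re_cinner
        \<mu>_def sum.distrib algebra_simps)
  then show ?thesis
    by blast
qed

end

lemma sum_le_sum_iff_componentwise_le:
  fixes F :: "'n::finite \<Rightarrow> real \<Rightarrow> real" and \<theta> :: "real^'n"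
  assumes "\<forall>n. P (\<theta> $ n)"
  shows "(\<forall>\<theta>'. (\<forall>n. P (\<theta>' $ n)) \<longrightarrow> (\<Sum>n\<in>UNIV. F n (\<theta> $ n)) \<le> (\<Sum>n\<in>UNIV. F n (\<theta>' $ n)))
     \<longleftrightarrow> (\<forall>n t. P t \<longrightarrow> F n (\<theta> $ n) \<le> F n t)"
proof
  assume min: "\<forall>\<theta>'. (\<forall>n. P (\<theta>' $ n)) \<longrightarrow> (\<Sum>n\<in>UNIV. F n (\<theta> $ n)) \<le> (\<Sum>n\<in>UNIV. F n (\<theta>' $ n))"
  show "\<forall>n t. P t \<longrightarrow> F n (\<theta> $ n) \<le> F n t"
  proof (intro allI impI)
    fix n t
    assume "P t"
    define \<theta>' where "\<theta>' = (\<chi> k. if k = n then t else \<theta> $ k)"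
    have "\<forall>k. P (\<theta>' $ k)"
      using assms \<open>P t\<close> by (simp add: \<theta>'_def)
    then have "(\<Sum>k\<in>UNIV. F k (\<theta> $ k)) \<le> (\<Sum>k\<in>UNIV. F k (\<theta>' $ k))"
      using min by blast
    moreover have "(\<Sum>k\<in>UNIV. F k (\<theta> $ k)) = F n (\<theta> $ n) + (\<Sum>k\<in>UNIV - {n}. F k (\<theta> $ k))"
      by (rule sum.remove) simp_all
    moreover have "(\<Sum>k\<in>UNIV. F k (\<theta>' $ k)) = F n t + (\<Sum>k\<in>UNIV - {n}. F k (\<theta> $ k))"
    proof -
      have "(\<Sum>k\<in>UNIV. F k (\<theta>' $ k)) = F n (\<theta>' $ n) + (\<Sum>k\<in>UNIV - {n}. F k (\<theta>' $ k))"
        by (rule sum.remove) simp_all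
      moreover have "(\<Sum>k\<in>UNIV - {n}. F k (\<theta>' $ k)) = (\<Sum>k\<in>UNIV - {n}. F k (\<theta> $ k))"
        by (intro sum.cong) (auto simp: \<theta>'_def)
      ultimately show ?thesis
        by (simp add: \<theta>'_def)
    qed
    ultimately show "F n (\<theta> $ n) \<le> F n t"
      by simp
  qed
next
  assume "\<forall>n t. P t \<longrightarrow> F n (\<theta> $ n) \<le> F n t"
  then show "\<forall>\<theta>'. (\<forall>n. P (\<theta>' $ n)) \<longrightarrow> (\<Sum>n\<in>UNIV. F n (\<theta> $ n)) \<le> (\<Sum>n\<in>UNIV. F n (\<theta>' $ n))"
    by (auto intro: sum_mono)
qed

theorem proposition1:
  fixes \<Psi> :: "'n::finite \<Rightarrow> complex^'m::finite^'n"
    and \<sigma> :: real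
    and f :: "real \<Rightarrow> real \<Rightarrow> complex"
    and s :: "'m \<Rightarrow> real"
    and y :: "real^'n"
    and thold :: "real^'n"
  assumes "\<sigma> > 0"
    and "herm_psd_fun f"
    and "\<forall>n. invertible (Cmat f s (thold$n))"
  shows "(\<forall>n. post_mean f s \<Psi> \<sigma> thold y n = w_tilde f s \<Psi> \<sigma> thold y n)
       \<and> (\<forall>\<theta>::real^'n. (\<forall>n. invertible (Cmat f s (\<theta>$n))) \<longrightarrow>
            ((\<forall>\<theta>'::real^'n. (\<forall>n. invertible (Cmat f s (\<theta>'$n))) \<longrightarrow>
                 EM_Q f s \<Psi> \<sigma> y thold \<theta>' \<le> EM_Q f s \<Psi> \<sigma> y thold \<theta>)
             \<longleftrightarrow>
             (\<forall>n. \<forall>t. invertible (Cmat f s t) \<longrightarrow>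
                 Qkn f s \<Psi> \<sigma> thold y n (\<theta>$n) \<le> Qkn f s \<Psi> \<sigma> thold y n t)))"
proof -
  interpret em_model \<Psi> \<sigma> f s y thold
    using assms by unfold_locales auto
  obtain K where K: "\<And>\<theta>. \<forall>n. invertible (Cmat f s (\<theta> $ n)) \<Longrightarrow>
      EM_Q f s \<Psi> \<sigma> y thold \<theta> = K - (\<Sum>n\<in>UNIV. Qkn f s \<Psi> \<sigma> thold y n (\<theta> $ n))"
    using EM_Q_separable by blast
  have "(\<forall>\<theta>'. (\<forall>n. invertible (Cmat f s (\<theta>' $ n))) \<longrightarrow>
          EM_Q f s \<Psi> \<sigma> y thold \<theta>' \<le> EM_Q f s \<Psi> \<sigma> y thold \<theta>)
      \<longleftrightarrow> (\<forall>n t. invertible (Cmat f s t) \<longrightarrow> Qkn f s \<Psi> \<sigma> thold y n (\<theta> $ n) \<le> Qkn f s \<Psi> \<sigma> thold y n t)"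
    if "\<forall>n. invertible (Cmat f s (\<theta> $ n))" for \<theta>
    using sum_le_sum_iff_componentwise_le[OF that, of "Qkn f s \<Psi> \<sigma> thold y"] that
    by (simp add: K)
  then show ?thesis
    using post_mean_eq_w_tilde by blast
qed

end
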